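(* Up to isomorphism in $\mathrm{rgr}\,A$, the graded simple right $A$-modules are exactly: $X\langle n\rangle$ for $n\in\mathbb{Z}$, $Y\langle n\rangle$ for $n\in\mathbb{Z}$, and $M_\lambda$ for $\lambda\in k\setminus\mathbb{Z}$; these are pairwise non-isomorphic.
   Context: $k$ is an algebraically closed field of characteristic $0$; $A=k\langle x,y\rangle/(xy-yx-1)$ is the first Weyl algebra graded by $\deg x=1$, $\deg y=-1$; $z=xy$, so $A_0=k[z]$. $\mathrm{rgr}\,A$ is the category of graded right $A$-modules with degree-preserving maps; $M\langle n\rangle_j=M_{j-n}$. $X=A/xA$, $Y=(A/yA)\langle1\rangle$, and $M_\lambda=A/(z+\lambda)A$. *)

theory Defs
  imports "HOL-Computational_Algebra.Polynomial"
begin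

text \<open>A is realised (faithfully, char 0) as the k-subalgebra of End_k(k[t]) generated by
  x = d/dt and y = multiplication by t; the product is composition, ab = a o b.
  Indeed (x o y - y o x) p = p.\<close>

type_synonym 'k wop = "'k poly \<Rightarrow> 'k poly"

definition oadd :: "'k::field wop \<Rightarrow> 'k wop \<Rightarrow> 'k wop" where
  "oadd a b = (\<lambda>p. a p + b p)"

definition oscal :: "'k::field \<Rightarrow> 'k wop" where
  "oscal c = (\<lambda>p. smult c p)"

definition ozero :: "'k::field wop" where
  "ozero = (\<lambda>p. 0)"

definition wx :: "'k::field wop" where
  "wx = pderiv"

definition wy :: "'k::field wop" where
  "wy = (\<lambda>p. pCons 0 p)"

inductive_set weyl :: "'k::field wop set" where
  weyl_x: "wx \<in> weyl"
| weyl_y: "wy \<in> weyl"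
| weyl_sc: "oscal c \<in> weyl"
| weyl_add: "a \<in> weyl \<Longrightarrow> b \<in> weyl \<Longrightarrow> oadd a b \<in> weyl"
| weyl_mult: "a \<in> weyl \<Longrightarrow> b \<in> weyl \<Longrightarrow> a \<circ> b \<in> weyl"

inductive whom :: "int \<Rightarrow> 'k::field wop \<Rightarrow> bool" where
  whom_x: "whom 1 wx"
| whom_y: "whom (-1) wy"
| whom_sc: "whom 0 (oscal c)"
| whom_add: "whom n a \<Longrightarrow> whom n b \<Longrightarrow> whom n (oadd a b)"
| whom_mult: "whom m a \<Longrightarrow> whom n b \<Longrightarrow> whom (m + n) (a \<circ> b)"

record ('a, 'v) rgr =
  gcar :: "'v set"
  gadd :: "'v \<Rightarrow> 'v \<Rightarrow> 'v"
  gzero :: "'v"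
  gact :: "'v \<Rightarrow> 'a \<Rightarrow> 'v"   (* right action  m . a ; 'a = operators of A *)
  gdeg :: "int \<Rightarrow> 'v set"

definition gsum :: "('a, 'v) rgr \<Rightarrow> 'v list \<Rightarrow> 'v" where
  "gsum M xs = foldr (gadd M) xs (gzero M)"

definition is_grmod :: "('k::field wop, 'v) rgr \<Rightarrow> bool" where
  "is_grmod M \<longleftrightarrow>
     gzero M \<in> gcar M \<and>
     (\<forall>u\<in>gcar M. \<forall>v\<in>gcar M. gadd M u v \<in> gcar M) \<and>
     (\<forall>u\<in>gcar M. \<forall>v\<in>gcar M. \<forall>w\<in>gcar M. gadd M (gadd M u v) w = gadd M u (gadd M v w)) \<and>
     (\<forall>u\<in>gcar M. \<forall>v\<in>gcar M. gadd M u v = gadd M v u) \<and>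
     (\<forall>u\<in>gcar M. gadd M (gzero M) u = u) \<and>
     (\<forall>u\<in>gcar M. \<exists>v\<in>gcar M. gadd M u v = gzero M) \<and>
     (\<forall>u\<in>gcar M. \<forall>a\<in>weyl. gact M u a \<in> gcar M) \<and>
     (\<forall>u\<in>gcar M. \<forall>a\<in>weyl. \<forall>b\<in>weyl. gact M u (oadd a b) = gadd M (gact M u a) (gact M u b)) \<and>
     (\<forall>u\<in>gcar M. \<forall>v\<in>gcar M. \<forall>a\<in>weyl. gact M (gadd M u v) a = gadd M (gact M u a) (gact M v a)) \<and>
     (\<forall>u\<in>gcar M. \<forall>a\<in>weyl. \<forall>b\<in>weyl. gact M u (a \<circ> b) = gact M (gact M u a) b) \<and>
     (\<forall>u\<in>gcar M. gact M u (\<lambda>p. p) = u) \<and>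
     (\<forall>j. gdeg M j \<subseteq> gcar M \<and> gzero M \<in> gdeg M j \<and>
          (\<forall>u\<in>gdeg M j. \<forall>v\<in>gdeg M j. gadd M u v \<in> gdeg M j)) \<and>
     (\<forall>j n u a. u \<in> gdeg M j \<longrightarrow> whom n a \<longrightarrow> gact M u a \<in> gdeg M (j + n)) \<and>
     (\<forall>u\<in>gcar M. \<exists>js f. distinct js \<and> (\<forall>j\<in>set js. f j \<in> gdeg M j) \<and>
          u = gsum M (map f js)) \<and>
     (\<forall>js f. distinct js \<longrightarrow> (\<forall>j\<in>set js. f j \<in> gdeg M j) \<longrightarrow>
          gsum M (map f js) = gzero M \<longrightarrow> (\<forall>j\<in>set js. f j = gzero M))"

definition is_gsub :: "('k::field wop, 'v) rgr \<Rightarrow> 'v set \<Rightarrow> bool" where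
  "is_gsub M N \<longleftrightarrow> N \<subseteq> gcar M \<and> gzero M \<in> N \<and>
     (\<forall>u\<in>N. \<forall>v\<in>N. gadd M u v \<in> N) \<and>
     (\<forall>u\<in>N. \<forall>a\<in>weyl. gact M u a \<in> N) \<and>
     (\<forall>u\<in>N. \<exists>js f. distinct js \<and> (\<forall>j\<in>set js. f j \<in> gdeg M j \<inter> N) \<and>
          u = gsum M (map f js))"

definition is_simple :: "('k::field wop, 'v) rgr \<Rightarrow> bool" where
  "is_simple M \<longleftrightarrow> gcar M \<noteq> {gzero M} \<and>
     (\<forall>N. is_gsub M N \<longrightarrow> N = {gzero M} \<or> N = gcar M)"

definition is_ghom :: "('k::field wop, 'v) rgr \<Rightarrow> ('k wop, 'w) rgr \<Rightarrow> ('v \<Rightarrow> 'w) \<Rightarrow> bool" where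
  "is_ghom M N f \<longleftrightarrow> (\<forall>u\<in>gcar M. f u \<in> gcar N) \<and>
     (\<forall>u\<in>gcar M. \<forall>v\<in>gcar M. f (gadd M u v) = gadd N (f u) (f v)) \<and>
     (\<forall>u\<in>gcar M. \<forall>a\<in>weyl. f (gact M u a) = gact N (f u) a) \<and>
     (\<forall>j. \<forall>u\<in>gdeg M j. f u \<in> gdeg N j)"

definition g_iso :: "('k::field wop, 'v) rgr \<Rightarrow> ('k wop, 'w) rgr \<Rightarrow> bool" where
  "g_iso M N \<longleftrightarrow> (\<exists>f. is_ghom M N f \<and> bij_betw f (gcar M) (gcar N))"

definition gshift :: "int \<Rightarrow> ('a, 'v) rgr \<Rightarrow> ('a, 'v) rgr" where
  "gshift n M = M\<lparr>gdeg := (\<lambda>j. gdeg M (j - n))\<rparr>"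

definition wcoset :: "'k::field wop \<Rightarrow> 'k wop \<Rightarrow> 'k wop set" where
  "wcoset a b = {oadd b (a \<circ> c) | c. c \<in> weyl}"

definition qmod :: "'k::field wop \<Rightarrow> ('k wop, 'k wop set) rgr" where
  "qmod a = \<lparr> gcar = {wcoset a b | b. b \<in> weyl},
              gadd = (\<lambda>C D. wcoset a (oadd (SOME b. b \<in> C) (SOME b. b \<in> D))),
              gzero = wcoset a ozero,
              gact = (\<lambda>C r. wcoset a ((SOME b. b \<in> C) \<circ> r)),
              gdeg = (\<lambda>j. {wcoset a b | b. whom j b}) \<rparr>"

definition Xmod :: "('k::field wop, 'k wop set) rgr" where
  "Xmod = qmod wx"

definition Ymod :: "('k::field wop, 'k wop set) rgr" where
  "Ymod = gshift 1 (qmod wy)"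

definition Mmod :: "'k::field \<Rightarrow> ('k wop, 'k wop set) rgr" where
  "Mmod l = qmod (oadd (wx \<circ> wy) (oscal l))"

end

theory Submission
  imports Defs "HOL-Library.Function_Algebras"
begin

text \<open>
  Inside End(k[t]) every homogeneous element of A of degree n is an operator
  t^j \<mapsto> Q(j) t^(j-n), where Q is a polynomial vanishing at 0, ..., n-1; in particular
  A_0 = k[yx], and such operators compose by shifting and multiplying their polynomials.
  Hence for homogeneous a the right ideal aA is described by divisibility, and for
  a \<in> {x, y, z + \<lambda>} the class of the operator (d, P) in A/aA vanishes iff P vanishes at
  one explicit point. This makes X, Y and M_\<lambda> (\<lambda> \<notin> \<int>) simple: every nonzero
  homogeneous class can be multiplied into a nonzero scalar.

  Conversely, let M be graded simple and m \<noteq> 0 homogeneous. Since m z generates M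
  (or is zero), m P(yx) = 0 for some nonzero P, and algebraic closedness yields a
  homogeneous f \<noteq> 0 with f (yx - s) = 0. Right multiplication by x and y moves such
  eigenvectors to neighbouring degrees, shifting s by \<plusminus>1, and kills them only
  when s = -1 resp. s = 0. If s \<notin> \<int> we reach degree 0, where f is killed by
  z + \<lambda> for \<lambda> = -1 - s; otherwise we reach an f killed by x or by y. A nonzero
  homogeneous element killed by a generates M, and the induced surjection from a
  shift of A/aA is an isomorphism because A/aA is simple. Finally, the degrees in which
  x, y or z + \<lambda> kill a nonzero homogeneous element are isomorphism invariants, and
  they separate the modules of the list.
\<close>

section \<open>Homogeneous elements of A as operators on k[t]\<close>

lemma sum_fun_apply: "(\<Sum>i\<in>S. f i) x = (\<Sum>i\<in>S. f i x)"
  by (induct S rule: infinite_finite_induct) auto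

text \<open>\<open>hom_op n Q\<close> sends t^j to Q(j) t^(j-n), and to 0 when j < n; so x = \<open>hom_op 1 [:0,1:]\<close>,
  y = \<open>hom_op (-1) 1\<close> and \<open>hom_op 0 Q\<close> = Q(yx).\<close>
definition hom_op :: "int \<Rightarrow> 'k::field_char_0 poly \<Rightarrow> 'k wop" where
  "hom_op n Q p = Abs_poly (\<lambda>i. if 0 \<le> int i + n then coeff p (nat (int i + n)) * poly Q (of_int (int i + n)) else 0)"

definition vanishes_below :: "int \<Rightarrow> 'k::field_char_0 poly \<Rightarrow> bool" where
  "vanishes_below n Q \<longleftrightarrow> (\<forall>j::nat. int j < n \<longrightarrow> poly Q (of_nat j) = 0)"

lemma coeff_hom_op:
  "coeff (hom_op n Q p) i = (if 0 \<le> int i + n then coeff p (nat (int i + n)) * poly Q (of_int (int i + n)) else 0)"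
  unfolding hom_op_def
proof (rule fun_cong[OF coeff_Abs_poly[of "degree p + nat \<bar>n\<bar>"]])
  fix i assume "degree p + nat \<bar>n\<bar> < i"
  then have "0 \<le> int i + n \<longrightarrow> nat (int i + n) > degree p" by linarith
  then show "(if 0 \<le> int i + n then coeff p (nat (int i + n)) * poly Q (of_int (int i + n)) else 0) = 0"
    by (auto simp: coeff_eq_0)
qed

lemma hom_op_cong:
  assumes "n = m" and "\<And>x. poly P x = poly Q x"
  shows "hom_op n P = hom_op m Q"
proof -
  have "P = Q" using assms(2) by (simp add: poly_eq_poly_eq_iff[symmetric] fun_eq_iff)
  with assms(1) show ?thesis by simp
qed

lemma hom_op_add_arg: "hom_op n Q (p + q) = hom_op n Q p + hom_op n Q q"
  by (rule poly_eqI) (simp add: coeff_hom_op algebra_simps)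

lemma hom_op_0_arg: "hom_op n Q 0 = 0"
  by (rule poly_eqI) (simp add: coeff_hom_op)

lemma hom_op_add: "hom_op n (P + Q) = hom_op n P + hom_op n Q"
  by (rule ext, rule poly_eqI) (simp add: coeff_hom_op algebra_simps)

lemma hom_op_0: "hom_op n 0 = 0"
  by (rule ext, rule poly_eqI) (simp add: coeff_hom_op)

lemma hom_op_sum: "hom_op n (\<Sum>i\<in>I. P i) = (\<Sum>i\<in>I. hom_op n (P i))"
  by (induct I rule: infinite_finite_induct) (auto simp: hom_op_0 hom_op_add)

lemma hom_op_diff: "hom_op n (P - Q) = hom_op n P - hom_op n Q"
  by (rule ext, rule poly_eqI) (simp add: coeff_hom_op algebra_simps)

lemma hom_op_comp:
  assumes "vanishes_below n Q"
  shows "hom_op m P \<circ> hom_op n Q = hom_op (m + n) (Q * (P \<circ>\<^sub>p [:- of_int n, 1:]))"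
proof (rule ext, rule poly_eqI)
  fix p i
  show "coeff ((hom_op m P \<circ> hom_op n Q) p) i = coeff (hom_op (m + n) (Q * (P \<circ>\<^sub>p [:- of_int n, 1:])) p) i"
  proof (cases "0 \<le> int i + m")
    case True
    have e1: "int (nat (int i + m)) = int i + m" using True by simp
    show ?thesis using True by (simp add: coeff_hom_op poly_pcompose e1 add.assoc mult_ac)
  next
    case False
    show ?thesis
    proof (cases "0 \<le> int i + (m + n)")
      case True
      define j where "j = nat (int i + (m + n))"
      have "int j < n" using False True unfolding j_def by linarith
      then have "poly Q (of_nat j) = 0" using assms unfolding vanishes_below_def by blast
      moreover have "(of_nat j :: 'a) = of_int (int i + (m + n))" using True unfolding j_def
        by (metis of_int_of_nat_eq nat_0_le)
      ultimately show ?thesis using False True by (simp add: coeff_hom_op)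
    next
      case False2: False
      then show ?thesis using False by (simp add: coeff_hom_op)
    qed
  qed
qed

lemma vanishes_below_add: "vanishes_below n P \<Longrightarrow> vanishes_below n Q \<Longrightarrow> vanishes_below n (P + Q)"
  by (simp add: vanishes_below_def)
lemma vanishes_below_diff: "vanishes_below n P \<Longrightarrow> vanishes_below n Q \<Longrightarrow> vanishes_below n (P - Q)"
  by (simp add: vanishes_below_def)
lemma vanishes_below_0: "vanishes_below n 0" by (simp add: vanishes_below_def)
lemma vanishes_below_sum: "(\<And>i. i \<in> I \<Longrightarrow> vanishes_below n (P i)) \<Longrightarrow> vanishes_below n (\<Sum>i\<in>I. P i)"
  by (induct I rule: infinite_finite_induct) (auto simp: vanishes_below_0 vanishes_below_add)
lemma vanishes_below_nonpos: "n \<le> 0 \<Longrightarrow> vanishes_below n Q" by (simp add: vanishes_below_def)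

lemma vanishes_below_comp:
  assumes "vanishes_below m P" "vanishes_below n Q"
  shows "vanishes_below (m + n) (Q * (P \<circ>\<^sub>p [:- of_int n, 1:]))"
  unfolding vanishes_below_def
proof (intro allI impI)
  fix j :: nat assume j: "int j < m + n"
  show "poly (Q * (P \<circ>\<^sub>p [:- of_int n, 1:])) (of_nat j) = 0"
  proof (cases "int j < n")
    case True then show ?thesis using assms(2) by (simp add: vanishes_below_def)
  next
    case False
    define k where "k = nat (int j - n)"
    have "int k < m" using False j unfolding k_def by linarith
    then have "poly P (of_nat k) = 0" using assms(1) by (simp add: vanishes_below_def)
    moreover have "int k = int j - n" using False unfolding k_def by simp
    then have "(of_int (int k) :: 'a) = of_int (int j - n)" by simp
    then have "(of_nat k :: 'a) = of_nat j - of_int n" by simp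
    ultimately show ?thesis by (simp add: poly_pcompose)
  qed
qed

lemma vanishes_below_succ_iff:
  assumes "vanishes_below d P"
  shows "vanishes_below (d + 1) P \<longleftrightarrow> (0 \<le> d \<longrightarrow> poly P (of_int d) = 0)"
proof
  assume "vanishes_below (d + 1) P"
  then show "0 \<le> d \<longrightarrow> poly P (of_int d) = 0"
    unfolding vanishes_below_def by (metis less_add_one nonneg_int_cases of_int_of_nat_eq)
next
  assume "0 \<le> d \<longrightarrow> poly P (of_int d) = 0"
  then show "vanishes_below (d + 1) P"
    using assms unfolding vanishes_below_def by (metis int_ops(1) linorder_not_less of_int_of_nat_eq of_nat_0_le_iff zless_add1_eq)
qed

lemma poly_eq_0_if_nat_roots:
  fixes P :: "'k::field_char_0 poly"
  assumes "\<And>j::nat. poly P (of_nat j) = 0" shows "P = 0"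
proof (rule ccontr)
  assume "P \<noteq> 0"
  then have "finite {x. poly P x = 0}" by (rule poly_roots_finite)
  moreover have "range (of_nat :: nat \<Rightarrow> 'k) \<subseteq> {x. poly P x = 0}" using assms by auto
  ultimately have "finite (range (of_nat :: nat \<Rightarrow> 'k))" by (rule finite_subset[rotated])
  moreover have "inj (of_nat :: nat \<Rightarrow> 'k)" by (rule injI) simp
  ultimately show False using finite_imageD by fastforce
qed

lemma coeff_hom_op_monom: "coeff (hom_op n Q (monom 1 j)) i = (if int i + n = int j then poly Q (of_nat j) else 0)"
  by (auto simp: coeff_hom_op coeff_monom)

lemma hom_ops_independent:
  assumes fin: "finite S" and g: "\<And>n. n \<in> S \<Longrightarrow> vanishes_below n (P n)"
    and z: "(\<Sum>n\<in>S. hom_op n (P n)) = 0" and n0: "n0 \<in> S"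
  shows "P n0 = 0"
proof (rule poly_eq_0_if_nat_roots)
  fix j :: nat
  show "poly (P n0) (of_nat j) = 0"
  proof (cases "int j < n0")
    case True then show ?thesis using g[OF n0] by (simp add: vanishes_below_def)
  next
    case False
    define i where "i = nat (int j - n0)"
    have ii: "int i + n0 = int j" using False unfolding i_def by linarith
    have "0 = coeff ((\<Sum>n\<in>S. hom_op n (P n)) (monom 1 j)) i" using z by simp
    also have "\<dots> = (\<Sum>n\<in>S. if int i + n = int j then poly (P n) (of_nat j) else 0)"
      by (simp add: sum_fun_apply coeff_sum coeff_hom_op_monom)
    also have "\<dots> = (\<Sum>n\<in>S. if n = n0 then poly (P n) (of_nat j) else 0)"
      by (rule sum.cong) (use ii in auto)
    also have "\<dots> = poly (P n0) (of_nat j)" using fin n0 by simp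
    finally show ?thesis by simp
  qed
qed

lemma oadd_eq_plus: "oadd a b = a + b" by (rule ext) (simp add: oadd_def)
lemma ozero_eq_0: "ozero = 0" by (rule ext) (simp add: ozero_def)

lemma wx_eq_hom_op: "(wx :: 'k::field_char_0 wop) = hom_op 1 [:0,1:]"
proof (rule ext, rule poly_eqI)
  fix p :: "'k poly" and i
  have "nat (int i + 1) = Suc i" by simp
  then show "coeff (wx p) i = coeff (hom_op 1 [:0, 1:] p) i"
    by (simp add: wx_def coeff_pderiv coeff_hom_op algebra_simps)
qed

lemma wy_eq_hom_op: "(wy :: 'k::field_char_0 wop) = hom_op (-1) 1"
proof (rule ext, rule poly_eqI)
  fix p :: "'k poly" and i
  show "coeff (wy p) i = coeff (hom_op (-1) 1 p) i"
  proof (cases i)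
    case 0 then show ?thesis by (simp add: wy_def coeff_hom_op)
  next
    case (Suc j)
    then have "nat (int i - 1) = j" by simp
    then show ?thesis using Suc by (simp add: wy_def coeff_hom_op)
  qed
qed

lemma oscal_eq_hom_op: "(oscal c :: 'k::field_char_0 wop) = hom_op 0 [:c:]"
  by (rule ext, rule poly_eqI) (simp add: oscal_def coeff_hom_op mult.commute)

lemma whom_imp_hom_op: "whom n (a :: 'k::field_char_0 wop) \<Longrightarrow> \<exists>Q. vanishes_below n Q \<and> a = hom_op n Q"
proof (induct rule: whom.induct)
  case whom_x then show ?case by (intro exI[of _ "[:0,1:]"]) (simp add: wx_eq_hom_op vanishes_below_def)
next
  case whom_y then show ?case by (intro exI[of _ 1]) (simp add: wy_eq_hom_op vanishes_below_def)
next
  case (whom_sc c) then show ?case by (intro exI[of _ "[:c:]"]) (simp add: oscal_eq_hom_op vanishes_below_def)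
next
  case (whom_add n a b) then show ?case
    by (metis vanishes_below_add hom_op_add oadd_eq_plus)
next
  case (whom_mult m a n b)
  then obtain P Q where "vanishes_below m P" "a = hom_op m P" "vanishes_below n Q" "b = hom_op n Q" by blast
  then show ?case using hom_op_comp vanishes_below_comp by blast
qed

lemma whom_in_weyl: "whom n a \<Longrightarrow> a \<in> weyl"
  by (induct rule: whom.induct) (blast intro: weyl.intros)+

lemma hom_op_comp_0: "hom_op 0 P \<circ> hom_op 0 Q = hom_op 0 (Q * P)"
proof -
  have "hom_op 0 P \<circ> hom_op 0 Q = hom_op (0+0) (Q * (P \<circ>\<^sub>p [:- of_int 0, 1:]))" by (rule hom_op_comp) (simp add: vanishes_below_def)
  also have "\<dots> = hom_op 0 (Q * P)" by (rule hom_op_cong) (simp_all add: poly_pcompose)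
  finally show ?thesis .
qed

lemma yx_eq_hom_op: "(wy \<circ> wx :: 'k::field_char_0 wop) = hom_op 0 [:0,1:]"
proof -
  have "(wy \<circ> wx :: 'k wop) = hom_op (-1 + 1) ([:0,1:] * (1 \<circ>\<^sub>p [:- of_int 1, 1:]))"
    unfolding wx_eq_hom_op wy_eq_hom_op by (rule hom_op_comp) (simp add: vanishes_below_def)
  also have "\<dots> = hom_op 0 [:0,1:]" by (rule hom_op_cong) (simp_all add: poly_pcompose)
  finally show ?thesis .
qed

lemma whom_hom_op_0: "whom 0 (hom_op 0 (Q :: 'k::field_char_0 poly))"
proof (induct Q)
  case 0
  have "whom 0 (oscal (0::'k))" by (rule whom_sc)
  moreover have "oscal (0::'k) = hom_op 0 0" by (simp add: oscal_eq_hom_op)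
  ultimately show ?case by simp
next
  case (pCons c Q)
  have w1: "whom 0 (wy \<circ> wx :: 'k wop)" using whom_mult[OF whom_y whom_x] by simp
  have "hom_op 0 (pCons c Q) = hom_op 0 [:c:] + hom_op 0 ([:0,1:] * Q)"
    by (subst hom_op_add[symmetric]) (rule hom_op_cong, simp_all add: poly_pCons)
  also have "\<dots> = oadd (oscal c) (hom_op 0 Q \<circ> (wy \<circ> wx))"
    by (simp only: oadd_eq_plus oscal_eq_hom_op hom_op_comp_0 yx_eq_hom_op)
  finally have e: "hom_op 0 (pCons c Q) = oadd (oscal c) (hom_op 0 Q \<circ> (wy \<circ> wx))" .
  have "whom (0+0) (hom_op 0 Q \<circ> (wy \<circ> wx))" by (rule whom_mult[OF pCons(2) w1])
  then have "whom 0 (hom_op 0 Q \<circ> (wy \<circ> wx))" by simp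
  then show ?case unfolding e by (rule whom_add[OF whom_sc])
qed

lemma whom_hom_op_neg: "whom (- int k) (hom_op (- int k) (1 :: 'k::field_char_0 poly))"
proof (induct k)
  case 0 then show ?case using whom_hom_op_0[of 1] by simp
next
  case (Suc k)
  have "(wy :: 'k wop) \<circ> hom_op (- int k) 1 = hom_op (-1 + - int k) (1 * (1 \<circ>\<^sub>p [:- of_int (- int k), 1:]))"
    unfolding wy_eq_hom_op by (rule hom_op_comp) (simp add: vanishes_below_def)
  also have "\<dots> = hom_op (- int (Suc k)) 1" by (rule hom_op_cong) (simp_all add: poly_pcompose)
  finally have e: "(wy :: 'k wop) \<circ> hom_op (- int k) 1 = hom_op (- int (Suc k)) 1" .
  have "whom (-1 + - int k) ((wy :: 'k wop) \<circ> hom_op (- int k) 1)" by (rule whom_mult[OF whom_y Suc])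
  then show ?case by (simp add: e)
qed

lemma whom_hom_op_nonpos:
  assumes "n \<le> 0" shows "whom n (hom_op n (Q :: 'k::field_char_0 poly))"
proof -
  obtain k where k: "n = - int k" using assms by (metis minus_minus neg_0_le_iff_le nonneg_int_cases)
  have "hom_op 0 (Q \<circ>\<^sub>p [:of_int n, 1:]) \<circ> hom_op n 1 = hom_op (0 + n) (1 * ((Q \<circ>\<^sub>p [:of_int n, 1:]) \<circ>\<^sub>p [:- of_int n, 1:]))"
    by (rule hom_op_comp) (simp add: vanishes_below_nonpos assms)
  also have "\<dots> = hom_op n Q" by (rule hom_op_cong) (simp_all add: poly_pcompose)
  finally have e: "hom_op 0 (Q \<circ>\<^sub>p [:of_int n, 1:]) \<circ> hom_op n 1 = hom_op n Q" .
  have "whom (0 + n) (hom_op 0 (Q \<circ>\<^sub>p [:of_int n, 1:]) \<circ> hom_op n 1)"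
    by (rule whom_mult[OF whom_hom_op_0]) (use whom_hom_op_neg[of k] k in simp)
  then show ?thesis by (simp add: e)
qed

lemma whom_hom_op_nat: "vanishes_below (int k) Q \<Longrightarrow> whom (int k) (hom_op (int k) (Q :: 'k::field_char_0 poly))"
proof (induct k arbitrary: Q)
  case 0 then show ?case using whom_hom_op_0 by simp
next
  case (Suc k)
  have "poly Q (of_nat k) = 0" using Suc(2) by (simp add: vanishes_below_def)
  then obtain R where R: "Q = [:- of_nat k, 1:] * R" using poly_eq_0_iff_dvd by (metis dvdE)
  have gR: "vanishes_below (int k) R"
    unfolding vanishes_below_def
  proof (intro allI impI)
    fix j :: nat assume j: "int j < int k"
    then have "poly Q (of_nat j) = 0" using Suc(2) by (simp add: vanishes_below_def)
    moreover have "(of_nat j :: 'k) - of_nat k \<noteq> 0" using j by simp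
    ultimately show "poly R (of_nat j) = 0" by (simp add: R)
  qed
  have "(wx :: 'k wop) \<circ> hom_op (int k) R = hom_op (1 + int k) (R * ([:0,1:] \<circ>\<^sub>p [:- of_int (int k), 1:]))"
    unfolding wx_eq_hom_op by (rule hom_op_comp[OF gR])
  also have "\<dots> = hom_op (int (Suc k)) Q" by (rule hom_op_cong) (simp_all add: poly_pcompose R algebra_simps)
  finally have e: "(wx :: 'k wop) \<circ> hom_op (int k) R = hom_op (int (Suc k)) Q" .
  have "whom (1 + int k) ((wx :: 'k wop) \<circ> hom_op (int k) R)" by (rule whom_mult[OF whom_x Suc(1)[OF gR]])
  then show ?case by (simp add: e)
qed

lemma whom_hom_op: "vanishes_below n Q \<Longrightarrow> whom n (hom_op n (Q :: 'k::field_char_0 poly))"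
proof (cases "n \<le> 0")
  case True then show ?thesis by (rule whom_hom_op_nonpos)
next
  case False
  then obtain k where "n = int k" by (metis linorder_not_le nonneg_int_cases order_less_imp_le)
  then show "vanishes_below n Q \<Longrightarrow> ?thesis" using whom_hom_op_nat by blast
qed

lemma hom_op_in_weyl: "vanishes_below n Q \<Longrightarrow> hom_op n (Q :: 'k::field_char_0 poly) \<in> weyl"
  using whom_hom_op whom_in_weyl by blast

lemma whom_0: "whom n (0 :: 'k::field_char_0 wop)"
  using whom_hom_op[OF vanishes_below_0, of n] by (simp add: hom_op_0)

lemma sum_hom_ops_regroup:
  fixes d :: "'i \<Rightarrow> int" and C :: "'i \<Rightarrow> 'k::field_char_0 poly"
  assumes "finite I" "\<And>i. i \<in> I \<Longrightarrow> vanishes_below (d i) (C i)"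
  shows "\<exists>S P. finite S \<and> (\<forall>n\<in>S. vanishes_below n (P n)) \<and> (\<Sum>i\<in>I. hom_op (d i) (C i)) = (\<Sum>n\<in>S. hom_op n (P n))"
proof (intro exI conjI)
  let ?P = "\<lambda>n. \<Sum>i\<in>{i\<in>I. d i = n}. C i"
  show "finite (d ` I)" using assms by simp
  show "\<forall>n\<in>d ` I. vanishes_below n (?P n)"
  proof
    fix n assume "n \<in> d ` I"
    show "vanishes_below n (?P n)" by (rule vanishes_below_sum) (use assms(2) in fastforce)
  qed
  have "(\<Sum>i\<in>I. hom_op (d i) (C i)) = (\<Sum>n\<in>d ` I. \<Sum>i\<in>{i\<in>I. d i = n}. hom_op (d i) (C i))"
    by (rule sum.image_gen[OF assms(1)])
  also have "\<dots> = (\<Sum>n\<in>d ` I. \<Sum>i\<in>{i\<in>I. d i = n}. hom_op n (C i))"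
    by (rule sum.cong[OF refl], rule sum.cong) auto
  also have "\<dots> = (\<Sum>n\<in>d ` I. hom_op n (?P n))" by (simp add: hom_op_sum)
  finally show "(\<Sum>i\<in>I. hom_op (d i) (C i)) = (\<Sum>n\<in>d ` I. hom_op n (?P n))" .
qed

lemma sum_comp: "(\<Sum>i\<in>S. f i) \<circ> g = (\<Sum>i\<in>S. f i \<circ> g)"
  by (rule ext) (simp add: sum_fun_apply)

lemma hom_op_sum_arg: "hom_op n Q (\<Sum>i\<in>I. p i) = (\<Sum>i\<in>I. hom_op n Q (p i))"
  by (induct I rule: infinite_finite_induct) (auto simp: hom_op_add_arg hom_op_0_arg)

lemma hom_op_comp_sum: "hom_op n Q \<circ> (\<Sum>i\<in>S. g i) = (\<Sum>i\<in>S. hom_op n Q \<circ> g i)"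
  by (rule ext) (simp add: sum_fun_apply hom_op_sum_arg)

lemma weyl_eq_sum_hom_ops:
  "a \<in> weyl \<Longrightarrow> \<exists>S P. finite S \<and> (\<forall>n\<in>S. vanishes_below n (P n)) \<and> (a :: 'k::field_char_0 wop) = (\<Sum>n\<in>S. hom_op n (P n))"
proof (induct rule: weyl.induct)
  case weyl_x then show ?case
    by (intro exI[of _ "{1}"] exI[of _ "\<lambda>_. [:0,1:]"]) (simp add: wx_eq_hom_op vanishes_below_def)
next
  case weyl_y then show ?case
    by (intro exI[of _ "{-1}"] exI[of _ "\<lambda>_. 1"]) (simp add: wy_eq_hom_op vanishes_below_def)
next
  case (weyl_sc c) then show ?case
    by (intro exI[of _ "{0}"] exI[of _ "\<lambda>_. [:c:]"]) (simp add: oscal_eq_hom_op vanishes_below_def)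
next
  case (weyl_add a b)
  then obtain S P T R where S: "finite S" "\<forall>n\<in>S. vanishes_below n (P n)" "a = (\<Sum>n\<in>S. hom_op n (P n))"
    and T: "finite T" "\<forall>n\<in>T. vanishes_below n (R n)" "b = (\<Sum>n\<in>T. hom_op n (R n))" by blast
  let ?d = "case_sum (\<lambda>n. n) (\<lambda>n. n)" and ?C = "case_sum P R"
  have e: "oadd a b = (\<Sum>i\<in>S <+> T. hom_op (?d i) (?C i))"
    by (simp add: oadd_eq_plus S T sum.Plus o_def)
  have fin: "finite (S <+> T)" using S T by simp
  have gd: "\<And>i. i \<in> S <+> T \<Longrightarrow> vanishes_below (?d i) (?C i)" using S T by auto
  obtain S' P' where S': "finite S'" "\<forall>n\<in>S'. vanishes_below n (P' n)"
     "(\<Sum>i\<in>S <+> T. hom_op (?d i) (?C i)) = (\<Sum>n\<in>S'. hom_op n (P' n))" using sum_hom_ops_regroup[of "S <+> T" ?d ?C, OF fin gd] by blast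
  show ?case by (rule exI[of _ S'], rule exI[of _ P']) (use S' e in simp)
next
  case (weyl_mult a b)
  then obtain S P T R where S: "finite S" "\<forall>n\<in>S. vanishes_below n (P n)" "a = (\<Sum>n\<in>S. hom_op n (P n))"
    and T: "finite T" "\<forall>n\<in>T. vanishes_below n (R n)" "b = (\<Sum>n\<in>T. hom_op n (R n))" by blast
  let ?d = "\<lambda>(n, m). n + m" and ?C = "\<lambda>(n, m). R m * (P n \<circ>\<^sub>p [:- of_int m, 1:])"
  have "a \<circ> b = (\<Sum>n\<in>S. \<Sum>m\<in>T. hom_op n (P n) \<circ> hom_op m (R m))"
    by (simp add: S T sum_comp hom_op_comp_sum)
  also have "\<dots> = (\<Sum>n\<in>S. \<Sum>m\<in>T. hom_op (n + m) (R m * (P n \<circ>\<^sub>p [:- of_int m, 1:])))"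
    using T(2) by (intro sum.cong refl hom_op_comp) auto
  also have "\<dots> = (\<Sum>i\<in>S \<times> T. hom_op (?d i) (?C i))"
    by (simp add: sum.cartesian_product case_prod_beta)
  finally have e: "a \<circ> b = (\<Sum>i\<in>S \<times> T. hom_op (?d i) (?C i))" .
  have fin: "finite (S \<times> T)" using S T by simp
  have gd: "\<And>i. i \<in> S \<times> T \<Longrightarrow> vanishes_below (?d i) (?C i)" using S(2) T(2) by (auto intro!: vanishes_below_comp)
  obtain S' P' where S': "finite S'" "\<forall>n\<in>S'. vanishes_below n (P' n)"
     "(\<Sum>i\<in>S \<times> T. hom_op (?d i) (?C i)) = (\<Sum>n\<in>S'. hom_op n (P' n))" using sum_hom_ops_regroup[of "S \<times> T" ?d ?C, OF fin gd] by blast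
  show ?case by (rule exI[of _ S'], rule exI[of _ P']) (use S' e in simp)
qed

lemma weyl_additive: "a \<in> (weyl :: 'k::field_char_0 wop set) \<Longrightarrow> a (p + q) = a p + a q"
  using weyl_eq_sum_hom_ops[of a] by (auto simp: sum_fun_apply hom_op_add_arg sum.distrib)

lemma weyl_apply_0: "a \<in> (weyl :: 'k::field_char_0 wop set) \<Longrightarrow> a 0 = 0"
  using weyl_eq_sum_hom_ops[of a] by (auto simp: sum_fun_apply hom_op_0_arg)

lemma weyl_comp_add: "a \<in> (weyl :: 'k::field_char_0 wop set) \<Longrightarrow> a \<circ> (b + c) = (a \<circ> b) + (a \<circ> c)"
proof (rule ext)
  fix p assume a: "a \<in> weyl"
  show "(a \<circ> (b + c)) p = ((a \<circ> b) + (a \<circ> c)) p" using weyl_additive[OF a, of "b p" "c p"] by simp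
qed

lemma weyl_apply_uminus: "a \<in> (weyl :: 'k::field_char_0 wop set) \<Longrightarrow> a (- p) = - a p"
proof -
  assume a: "a \<in> weyl"
  have "a p + a (- p) = 0" using weyl_additive[OF a, of p "- p"] weyl_apply_0[OF a] by simp
  then show ?thesis by (simp add: eq_neg_iff_add_eq_0 add.commute)
qed

lemma weyl_comp_diff: "a \<in> (weyl :: 'k::field_char_0 wop set) \<Longrightarrow> a \<circ> (b - c) = (a \<circ> b) - (a \<circ> c)"
proof (rule ext)
  fix p assume a: "a \<in> weyl"
  have "a (b p - c p) = a (b p) - a (c p)"
    by (simp only: diff_conv_add_uminus weyl_additive[OF a] weyl_apply_uminus[OF a])
  then show "(a \<circ> (b - c)) p = ((a \<circ> b) - (a \<circ> c)) p" by simp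
qed

lemma weyl_comp_0: "a \<in> (weyl :: 'k::field_char_0 wop set) \<Longrightarrow> a \<circ> 0 = 0"
  by (rule ext) (simp add: weyl_apply_0)

lemma weyl_0: "(0 :: 'k::field_char_0 wop) \<in> weyl"
proof -
  have "oscal (0::'k) = 0" by (rule ext) (simp add: oscal_def)
  then show ?thesis using weyl_sc[of "0::'k"] by simp
qed

lemma weyl_plus: "a \<in> weyl \<Longrightarrow> b \<in> weyl \<Longrightarrow> a + b \<in> weyl"
  using weyl_add oadd_eq_plus by metis

lemma weyl_id: "(id :: 'k::field_char_0 wop) \<in> weyl"
proof -
  have "oscal (1::'k) = id" by (rule ext) (simp add: oscal_def)
  then show ?thesis using weyl_sc by metis
qed

lemma weyl_uminus: "a \<in> weyl \<Longrightarrow> (- a :: 'k::field_char_0 wop) \<in> weyl"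
proof -
  assume a: "a \<in> weyl"
  have "oscal (-1::'k) \<circ> a = - a" by (rule ext) (simp add: oscal_def)
  then show ?thesis using weyl_mult[OF weyl_sc a] by metis
qed

lemma weyl_diff: "a \<in> weyl \<Longrightarrow> b \<in> weyl \<Longrightarrow> (a - b :: 'k::field_char_0 wop) \<in> weyl"
  unfolding diff_conv_add_uminus by (intro weyl_plus weyl_uminus)

lemma weyl_sum: "(\<And>i. i \<in> S \<Longrightarrow> f i \<in> weyl) \<Longrightarrow> (\<Sum>i\<in>S. f i :: 'k::field_char_0 wop) \<in> weyl"
  by (induct S rule: infinite_finite_induct) (auto simp: weyl_0 weyl_plus)

lemma weyl_eq_sum_list_whom:
  assumes "a \<in> weyl"
  obtains ns h where "distinct ns" "\<forall>n\<in>set ns. whom n (h n)" "(a :: 'k::field_char_0 wop) = sum_list (map h ns)"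
proof -
  obtain S P where S: "finite S" "\<forall>n\<in>S. vanishes_below n (P n)" "a = (\<Sum>n\<in>S. hom_op n (P n))"
    using weyl_eq_sum_hom_ops[OF assms] by blast
  show ?thesis
    by (rule that[of "sorted_list_of_set S" "\<lambda>n. hom_op n (P n)"])
      (use S whom_hom_op in \<open>auto simp: sum_list_distinct_conv_sum_set\<close>)
qed

lemma sum_hom_ops_component_eq:
  assumes fS: "finite S" and fT: "finite T" and gS: "\<forall>n\<in>S. vanishes_below n (P n)" and gT: "\<forall>n\<in>T. vanishes_below n (R n)"
    and e: "(\<Sum>n\<in>S. hom_op n (P n)) = (\<Sum>n\<in>T. hom_op n (R n))" and n: "n \<in> S"
  shows "P n = (if n \<in> T then R n else 0)"
proof -
  let ?P' = "\<lambda>n. (if n \<in> S then P n else 0) - (if n \<in> T then R n else 0)"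
  have fin': "finite (S \<union> T)" using fS fT by simp
  have g': "\<And>n. n \<in> S \<union> T \<Longrightarrow> vanishes_below n (?P' n)" using gS gT by (auto intro!: vanishes_below_diff vanishes_below_0 simp: vanishes_below_def)
  have "(\<Sum>n\<in>S \<union> T. hom_op n (?P' n)) = (\<Sum>n\<in>S \<union> T. hom_op n (if n \<in> S then P n else 0)) - (\<Sum>n\<in>S \<union> T. hom_op n (if n \<in> T then R n else 0))"
    by (simp add: hom_op_diff sum_subtractf)
  also have "(\<Sum>n\<in>S \<union> T. hom_op n (if n \<in> S then P n else 0)) = (\<Sum>n\<in>S. hom_op n (P n))"
    using fS fT by (intro sum.mono_neutral_cong_right) (auto simp: hom_op_0)
  also have "(\<Sum>n\<in>S \<union> T. hom_op n (if n \<in> T then R n else 0)) = (\<Sum>n\<in>T. hom_op n (R n))"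
    using fS fT by (intro sum.mono_neutral_cong_right) (auto simp: hom_op_0)
  finally have "(\<Sum>n\<in>S \<union> T. hom_op n (?P' n)) = 0" using e by (simp add: zero_fun_def)
  then have "?P' n = 0" using hom_ops_independent[OF fin' g'] n by blast
  then show ?thesis using n by auto
qed

primrec falling_poly :: "nat \<Rightarrow> 'k::field_char_0 poly" where
  "falling_poly 0 = 1"
| "falling_poly (Suc k) = falling_poly k * [:- of_nat k, 1:]"

lemma poly_falling_poly_nat: "i < k \<Longrightarrow> poly (falling_poly k) (of_nat i :: 'k::field_char_0) = 0"
  by (induct k) (auto simp: less_Suc_eq)

lemma vanishes_below_falling_poly: "vanishes_below (int k) (falling_poly k)"
  unfolding vanishes_below_def using poly_falling_poly_nat by auto

lemma poly_falling_poly_neq_0: "(\<forall>i::nat. x \<noteq> of_nat i) \<Longrightarrow> poly (falling_poly k) x \<noteq> 0"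
  by (induct k) auto

lemma oscal_comp_inverse: "t \<noteq> 0 \<Longrightarrow> oscal t \<circ> oscal (inverse t) = (id :: 'k::field_char_0 wop)"
  by (rule ext) (simp add: oscal_def)

lemma id_eq_hom_op: "(id :: 'k::field_char_0 wop) = hom_op 0 1"
proof -
  have "oscal (1::'k) = id" by (rule ext) (simp add: oscal_def)
  then show ?thesis using oscal_eq_hom_op[of "1::'k"] by (simp add: one_pCons)
qed

lemma oadd_minus: "oadd x (- y) = (x - y :: 'k::field_char_0 wop)"
  by (rule ext) (simp add: oadd_def)

lemma vanishes_below_at_0: "vanishes_below 0 P" by (rule vanishes_below_nonpos) simp
lemma hom_op_0_in_weyl: "hom_op 0 P \<in> weyl" by (rule hom_op_in_weyl[OF vanishes_below_at_0])

lemma hom_op_const: "hom_op 0 [:c:] = oscal c" by (simp add: oscal_eq_hom_op)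

lemma wx_comp_shift: "(wx :: 'k::field_char_0 wop) \<circ> hom_op 0 [:- (s + 1), 1:] = hom_op 0 [:- s, 1:] \<circ> wx"
proof -
  have "(wx :: 'k wop) \<circ> hom_op 0 [:- (s + 1), 1:] = hom_op (1 + 0) ([:- (s + 1), 1:] * ([:0,1:] \<circ>\<^sub>p [:- of_int 0, 1:]))"
    unfolding wx_eq_hom_op by (rule hom_op_comp[OF vanishes_below_at_0])
  also have "\<dots> = hom_op (0 + 1) ([:0,1:] * ([:- s, 1:] \<circ>\<^sub>p [:- of_int 1, 1:]))"
    by (rule hom_op_cong) (simp_all add: poly_pcompose algebra_simps)
  also have "\<dots> = hom_op 0 [:- s, 1:] \<circ> wx" unfolding wx_eq_hom_op by (rule hom_op_comp[symmetric]) (simp add: vanishes_below_def)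
  finally show ?thesis .
qed

lemma wy_comp_shift: "(wy :: 'k::field_char_0 wop) \<circ> hom_op 0 [:- (s - 1), 1:] = hom_op 0 [:- s, 1:] \<circ> wy"
proof -
  have "(wy :: 'k wop) \<circ> hom_op 0 [:- (s - 1), 1:] = hom_op (-1 + 0) ([:- (s - 1), 1:] * (1 \<circ>\<^sub>p [:- of_int 0, 1:]))"
    unfolding wy_eq_hom_op by (rule hom_op_comp[OF vanishes_below_at_0])
  also have "\<dots> = hom_op (0 + -1) (1 * ([:- s, 1:] \<circ>\<^sub>p [:- of_int (-1), 1:]))"
    by (rule hom_op_cong) (simp_all add: poly_pcompose algebra_simps)
  also have "\<dots> = hom_op 0 [:- s, 1:] \<circ> wy" unfolding wy_eq_hom_op by (rule hom_op_comp[symmetric]) (simp add: vanishes_below_def)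
  finally show ?thesis .
qed

locale grmod =
  fixes M :: "('k::field_char_0 wop, 'v) rgr"
  assumes graded: "is_grmod M"
begin

lemma zero_closed: "gzero M \<in> gcar M"
  using graded unfolding is_grmod_def by (elim conjE) (blast | auto)
lemma add_closed: "u \<in> gcar M \<Longrightarrow> v \<in> gcar M \<Longrightarrow> gadd M u v \<in> gcar M"
  using graded unfolding is_grmod_def by (elim conjE) (blast | auto)
lemma add_assoc: "u \<in> gcar M \<Longrightarrow> v \<in> gcar M \<Longrightarrow> w \<in> gcar M \<Longrightarrow> gadd M (gadd M u v) w = gadd M u (gadd M v w)"
  using graded unfolding is_grmod_def by (elim conjE) (blast | auto)
lemma add_comm: "u \<in> gcar M \<Longrightarrow> v \<in> gcar M \<Longrightarrow> gadd M u v = gadd M v u"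
  using graded unfolding is_grmod_def by (elim conjE) (blast | auto)
lemma zero_add: "u \<in> gcar M \<Longrightarrow> gadd M (gzero M) u = u"
  using graded unfolding is_grmod_def by (elim conjE) (blast | auto)
lemma neg_ex: "u \<in> gcar M \<Longrightarrow> \<exists>v\<in>gcar M. gadd M u v = gzero M"
  using graded unfolding is_grmod_def by (elim conjE) (blast | auto)
lemma act_closed: "u \<in> gcar M \<Longrightarrow> a \<in> weyl \<Longrightarrow> gact M u a \<in> gcar M"
  using graded unfolding is_grmod_def by (elim conjE) (blast | auto)
lemma act_oadd: "u \<in> gcar M \<Longrightarrow> a \<in> weyl \<Longrightarrow> b \<in> weyl \<Longrightarrow> gact M u (oadd a b) = gadd M (gact M u a) (gact M u b)"
  using graded unfolding is_grmod_def by (elim conjE) (blast | auto)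
lemma add_act: "u \<in> gcar M \<Longrightarrow> v \<in> gcar M \<Longrightarrow> a \<in> weyl \<Longrightarrow> gact M (gadd M u v) a = gadd M (gact M u a) (gact M v a)"
  using graded unfolding is_grmod_def by (elim conjE) (blast | auto)
lemma act_comp: "u \<in> gcar M \<Longrightarrow> a \<in> weyl \<Longrightarrow> b \<in> weyl \<Longrightarrow> gact M u (a \<circ> b) = gact M (gact M u a) b"
  using graded unfolding is_grmod_def by (elim conjE) (blast | auto)
lemma act_ident: "u \<in> gcar M \<Longrightarrow> gact M u (\<lambda>p. p) = u"
  using graded unfolding is_grmod_def by (elim conjE) (blast | auto)
lemma act_id: "u \<in> gcar M \<Longrightarrow> gact M u id = u"
  using act_ident by (simp add: id_def)
lemma deg_subset: "gdeg M j \<subseteq> gcar M"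
  using graded unfolding is_grmod_def by (elim conjE) (blast | auto)
lemma zero_deg: "gzero M \<in> gdeg M j"
  using graded unfolding is_grmod_def by (elim conjE) (blast | auto)
lemma add_deg: "u \<in> gdeg M j \<Longrightarrow> v \<in> gdeg M j \<Longrightarrow> gadd M u v \<in> gdeg M j"
  using graded unfolding is_grmod_def by (elim conjE) (blast | auto)
lemma act_deg: "u \<in> gdeg M j \<Longrightarrow> whom n a \<Longrightarrow> gact M u a \<in> gdeg M (j + n)"
  using graded unfolding is_grmod_def by (elim conjE) (blast | auto)
lemma homogeneous_decomp: "u \<in> gcar M \<Longrightarrow> \<exists>js f. distinct js \<and> (\<forall>j\<in>set js. f j \<in> gdeg M j) \<and> u = gsum M (map f js)"
  using graded unfolding is_grmod_def by (elim conjE) (blast | auto)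
lemma homogeneous_indep: "distinct js \<Longrightarrow> (\<forall>j\<in>set js. f j \<in> gdeg M j) \<Longrightarrow> gsum M (map f js) = gzero M \<Longrightarrow> j \<in> set js \<Longrightarrow> f j = gzero M"
  using graded unfolding is_grmod_def by (elim conjE) (blast | auto)

lemma add_zero: "u \<in> gcar M \<Longrightarrow> gadd M u (gzero M) = u"
  using add_comm zero_add zero_closed by metis

lemma add_eq_self_imp_0:
  assumes u: "u \<in> gcar M" and v: "v \<in> gcar M" and e: "gadd M u v = u" shows "v = gzero M"
proof -
  obtain w where w: "w \<in> gcar M" "gadd M u w = gzero M" using neg_ex[OF u] by blast
  have "gadd M w (gadd M u v) = gadd M w u" using e by simp
  then have "gadd M (gadd M w u) v = gadd M w u" using add_assoc u v w by simp
  moreover have "gadd M w u = gzero M" using w add_comm u by metis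
  ultimately show ?thesis using zero_add v by simp
qed

lemma act_0: "u \<in> gcar M \<Longrightarrow> gact M u 0 = gzero M"
proof -
  assume u: "u \<in> gcar M"
  have "oadd (0::'k wop) 0 = 0" by (simp add: oadd_eq_plus)
  then have "gact M u 0 = gadd M (gact M u 0) (gact M u 0)" using act_oadd[OF u weyl_0 weyl_0] by simp
  then show ?thesis using add_eq_self_imp_0 act_closed[OF u weyl_0] by metis
qed

lemma zero_act: "a \<in> weyl \<Longrightarrow> gact M (gzero M) a = gzero M"
proof -
  assume a: "a \<in> weyl"
  have "gact M (gzero M) a = gadd M (gact M (gzero M) a) (gact M (gzero M) a)"
    using add_act[OF zero_closed zero_closed a] zero_add[OF zero_closed] by simp
  then show ?thesis using add_eq_self_imp_0 act_closed[OF zero_closed a] by metis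
qed

definition neg :: "'v \<Rightarrow> 'v" where "neg u = gact M u (oscal (-1))"

lemma neg_deg: "u \<in> gdeg M j \<Longrightarrow> neg u \<in> gdeg M j"
  unfolding neg_def using act_deg[of u j 0 "oscal (-1)"] whom_sc[of "-1"] by simp

lemma add_neg: "u \<in> gcar M \<Longrightarrow> gadd M u (neg u) = gzero M"
proof -
  assume u: "u \<in> gcar M"
  have "oadd id (oscal (-1)) = (0 :: 'k wop)" by (rule ext) (simp add: oadd_def oscal_def)
  then have "gact M u (oadd id (oscal (-1))) = gzero M" using act_0[OF u] by simp
  then show ?thesis using act_oadd[OF u weyl_id weyl_sc] act_id[OF u] unfolding neg_def by simp
qed

lemma neg_unique: "u \<in> gcar M \<Longrightarrow> v \<in> gcar M \<Longrightarrow> w \<in> gcar M \<Longrightarrow> gadd M u v = gzero M \<Longrightarrow> gadd M w v = gzero M \<Longrightarrow> u = w"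
proof -
  assume a: "u \<in> gcar M" "v \<in> gcar M" "w \<in> gcar M" "gadd M u v = gzero M" "gadd M w v = gzero M"
  have "u = gadd M u (gadd M v w)" using a add_comm add_zero by metis
  also have "\<dots> = gadd M (gadd M u v) w" using a add_assoc by metis
  also have "\<dots> = w" using a zero_add by metis
  finally show ?thesis .
qed

lemma gsum_Cons: "gsum M (x # xs) = gadd M x (gsum M xs)" by (simp add: gsum_def)
lemma gsum_Nil: "gsum M [] = gzero M" by (simp add: gsum_def)

lemma gsum_closed: "(\<forall>x\<in>set xs. x \<in> gcar M) \<Longrightarrow> gsum M xs \<in> gcar M"
  by (induct xs) (auto simp: gsum_Cons gsum_Nil zero_closed add_closed)

lemma gsum_zeros: "(\<forall>x\<in>set xs. x = gzero M) \<Longrightarrow> gsum M xs = gzero M"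
  by (induct xs) (auto simp: gsum_Cons gsum_Nil zero_add zero_closed)

lemma gsum_update:
  assumes "distinct js" "i \<in> set js" "\<forall>j\<in>set js. f j \<in> gcar M" "v \<in> gcar M"
  shows "gsum M (map (f(i := gadd M (f i) v)) js) = gadd M (gsum M (map f js)) v"
  using assms
proof (induct js)
  case Nil then show ?case by simp
next
  case (Cons j js)
  have G: "gsum M (map f js) \<in> gcar M" using Cons by (auto intro!: gsum_closed)
  show ?case
  proof (cases "j = i")
    case True
    then have m: "map (f(i := gadd M (f i) v)) js = map f js" using Cons(2) by (auto intro!: map_cong)
    have fi: "f i \<in> gcar M" using Cons True by auto
    have "gadd M (gadd M (f i) v) (gsum M (map f js)) = gadd M (f i) (gadd M v (gsum M (map f js)))"
      using add_assoc[OF fi Cons(5) G] .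
    also have "\<dots> = gadd M (f i) (gadd M (gsum M (map f js)) v)" using add_comm[OF Cons(5) G] by simp
    also have "\<dots> = gadd M (gadd M (f i) (gsum M (map f js))) v" using add_assoc[OF fi G Cons(5)] by simp
    finally have r: "gadd M (gadd M (f i) v) (gsum M (map f js)) = gadd M (gadd M (f i) (gsum M (map f js))) v" .
    show ?thesis unfolding list.map gsum_Cons m using True r by simp
  next
    case False
    then have "gsum M (map (f(i := gadd M (f i) v)) js) = gadd M (gsum M (map f js)) v"
      using Cons by (auto simp: fun_upd_def)
    then show ?thesis using False Cons G by (simp add: gsum_Cons add_assoc)
  qed
qed

lemma homogeneous_decomp_unique:
  assumes u: "u \<in> gdeg M i" and d: "distinct js" and f: "\<forall>j\<in>set js. f j \<in> gdeg M j"
    and e: "u = gsum M (map f js)"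
  shows "\<forall>j\<in>set js. f j = (if j = i then u else gzero M)" and "i \<notin> set js \<Longrightarrow> u = gzero M"
proof -
  have uc: "u \<in> gcar M" using u deg_subset by blast
  have fc: "\<forall>j\<in>set js. f j \<in> gcar M" using f deg_subset by blast
  define v where "v = neg u"
  have vd: "v \<in> gdeg M i" unfolding v_def by (rule neg_deg[OF u])
  have vc: "v \<in> gcar M" using vd deg_subset by blast
  have uv: "gadd M u v = gzero M" unfolding v_def by (rule add_neg[OF uc])
  have "(\<forall>j\<in>set js. f j = (if j = i then u else gzero M)) \<and> (i \<notin> set js \<longrightarrow> u = gzero M)"
  proof (cases "i \<in> set js")
    case True
    let ?f = "f(i := gadd M (f i) v)"
    have "gsum M (map ?f js) = gzero M" using gsum_update[OF d True fc vc] e uv by simp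
    moreover have "\<forall>j\<in>set js. ?f j \<in> gdeg M j" using f vd True by (auto intro: add_deg)
    ultimately have z: "\<forall>j\<in>set js. ?f j = gzero M" using homogeneous_indep[OF d] by blast
    have "f i = u"
    proof -
      have "gadd M (f i) v = gzero M" using z True by auto
      then show ?thesis using neg_unique[of "f i" v u] fc True uc vc uv by blast
    qed
    then show ?thesis using z True by auto
  next
    case False
    let ?f = "f(i := v)"
    have m: "map ?f js = map f js" using False by (auto intro!: map_cong)
    have "gsum M (map ?f (i # js)) = gadd M v u" unfolding list.map gsum_Cons m e by simp
    also have "\<dots> = gzero M" using uv add_comm uc vc by metis
    finally have "gsum M (map ?f (i # js)) = gzero M" .
    moreover have "distinct (i # js)" using d False by simp
    moreover have "\<forall>j\<in>set (i # js). ?f j \<in> gdeg M j" using f vd by auto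
    ultimately have z: "\<forall>j\<in>set (i # js). ?f j = gzero M" using homogeneous_indep by blast
    then have "v = gzero M" by simp
    then have "u = gzero M" using uv add_zero uc by simp
    then show ?thesis using z False by auto
  qed
  then show "\<forall>j\<in>set js. f j = (if j = i then u else gzero M)" and "i \<notin> set js \<Longrightarrow> u = gzero M" by auto
qed

lemma act_sum_list:
  assumes u: "u \<in> gcar M" and h: "\<forall>n\<in>set ns. h n \<in> weyl"
  shows "gact M u (sum_list (map h ns)) = gsum M (map (\<lambda>n. gact M u (h n)) ns)"
  using h
proof (induct ns)
  case Nil then show ?case by (simp only: list.map sum_list.Nil gsum_Nil act_0[OF u])
next
  case (Cons n ns)
  have "sum_list (map h ns) \<in> weyl" using Cons(2)
    by (simp add: sum_list_distinct_conv_sum_set[symmetric]) (induct ns, auto simp: weyl_0 weyl_plus)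
  then have s: "sum_list (map h ns) \<in> weyl" .
  have hn: "h n \<in> weyl" using Cons(2) by simp
  have "gact M u (sum_list (map h (n # ns))) = gact M u (oadd (h n) (sum_list (map h ns)))"
    by (simp only: list.map sum_list.Cons oadd_eq_plus)
  also have "\<dots> = gadd M (gact M u (h n)) (gact M u (sum_list (map h ns)))" by (rule act_oadd[OF u hn s])
  also have "\<dots> = gadd M (gact M u (h n)) (gsum M (map (\<lambda>n. gact M u (h n)) ns))" using Cons by simp
  finally show ?case by (simp only: list.map gsum_Cons)
qed

lemma act_whom_decomp:
  assumes u: "u \<in> gdeg M d" and b: "b \<in> weyl"
  obtains ns h where "distinct ns" "\<forall>n\<in>set ns. whom n (h n)" "b = sum_list (map h ns)"
    "distinct (map ((+) d) ns)" "\<forall>j\<in>set (map ((+) d) ns). gact M u (h (j - d)) \<in> gdeg M j"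
    "gact M u b = gsum M (map (\<lambda>j. gact M u (h (j - d))) (map ((+) d) ns))"
proof -
  obtain ns h where ns: "distinct ns" and hw: "\<forall>n\<in>set ns. whom n (h n)" and bs: "b = sum_list (map h ns)"
    using weyl_eq_sum_list_whom[OF b] by blast
  have "gact M u b = gsum M (map (\<lambda>n. gact M u (h n)) ns)"
    using act_sum_list[of u ns h] bs hw u deg_subset whom_in_weyl by blast
  also have "\<dots> = gsum M (map (\<lambda>j. gact M u (h (j - d))) (map ((+) d) ns))" by (simp add: o_def)
  finally have act: "gact M u b = gsum M (map (\<lambda>j. gact M u (h (j - d))) (map ((+) d) ns))" .
  have "distinct (map ((+) d) ns)" using ns by (simp add: distinct_map)
  moreover have "\<forall>j\<in>set (map ((+) d) ns). gact M u (h (j - d)) \<in> gdeg M j"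
  proof
    fix j assume "j \<in> set (map ((+) d) ns)"
    then obtain n where "n \<in> set ns" "j = d + n" by auto
    then show "gact M u (h (j - d)) \<in> gdeg M j" using act_deg[OF u] hw by simp
  qed
  ultimately show ?thesis using that[OF ns hw bs _ _ act] by blast
qed

lemma act_homogeneous_component:
  assumes u: "u \<in> gdeg M s" and b: "b \<in> weyl" and ub: "gact M u b \<in> gdeg M j"
  shows "\<exists>c. whom (j - s) c \<and> gact M u b = gact M u c"
proof -
  obtain ns h where h: "distinct ns" "\<forall>n\<in>set ns. whom n (h n)" "b = sum_list (map h ns)" and
    D: "distinct (map ((+) s) ns)" "\<forall>i\<in>set (map ((+) s) ns). gact M u (h (i - s)) \<in> gdeg M i"
      "gact M u b = gsum M (map (\<lambda>i. gact M u (h (i - s))) (map ((+) s) ns))"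
    by (rule act_whom_decomp[OF u b])
  note unique = homogeneous_decomp_unique[OF ub D]
  show ?thesis
  proof (cases "j \<in> set (map ((+) s) ns)")
    case True
    then obtain n where n: "n \<in> set ns" "j = s + n" by auto
    have "gact M u (h (j - s)) = (if j = j then gact M u b else gzero M)"
      by (rule unique(1)[rule_format, OF True])
    moreover have "whom (j - s) (h (j - s))" using n h(2) by simp
    ultimately show ?thesis by (intro exI[of _ "h (j - s)"]) simp
  next
    case False
    have "gact M u b = gzero M" by (rule unique(2)[OF False])
    also have "\<dots> = gact M u 0" using act_0[of u] u deg_subset by (simp add: subset_iff)
    finally show ?thesis using whom_0 by blast
  qed
qed

lemma act_eq_0_components:
  assumes u: "u \<in> gdeg M s" and b: "b \<in> weyl" and z: "gact M u b = gzero M"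
  obtains ns h where "distinct ns" "\<forall>n\<in>set ns. whom n (h n) \<and> gact M u (h n) = gzero M"
    "b = sum_list (map h ns)"
proof -
  obtain ns h where h: "distinct ns" "\<forall>n\<in>set ns. whom n (h n)" "b = sum_list (map h ns)" and
    D: "distinct (map ((+) s) ns)" "\<forall>i\<in>set (map ((+) s) ns). gact M u (h (i - s)) \<in> gdeg M i"
      "gact M u b = gsum M (map (\<lambda>i. gact M u (h (i - s))) (map ((+) s) ns))"
    by (rule act_whom_decomp[OF u b])
  have "gact M u (h n) = gzero M" if "n \<in> set ns" for n
  proof -
    have "gsum M (map (\<lambda>i. gact M u (h (i - s))) (map ((+) s) ns)) = gzero M" using D(3) z by simp
    then have "gact M u (h (s + n - s)) = gzero M"
      using that by (intro homogeneous_indep[OF D(1,2)]) simp_all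
    then show ?thesis by simp
  qed
  then show ?thesis using that h by blast
qed

lemma cyclic_gsub:
  assumes e: "e \<in> gdeg M d"
  shows "is_gsub M {gact M e b | b. b \<in> weyl}"
  unfolding is_gsub_def
proof (intro conjI ballI)
  have ec: "e \<in> gcar M" using e deg_subset by blast
  let ?N = "{gact M e b | b. b \<in> weyl}"
  show "?N \<subseteq> gcar M" using act_closed[OF ec] by blast
  have "gzero M = gact M e 0" using act_0[OF ec] by simp
  then show "gzero M \<in> ?N" using weyl_0 by blast
  fix u assume "u \<in> ?N"
  then obtain b where b: "b \<in> weyl" "u = gact M e b" by blast
  { fix v assume "v \<in> ?N"
    then obtain b' where b': "b' \<in> weyl" "v = gact M e b'" by blast
    have "gadd M u v = gact M e (oadd b b')" using b b' act_oadd[OF ec b(1) b'(1)] by simp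
    then show "gadd M u v \<in> ?N" using weyl_add[OF b(1) b'(1)] by blast }
  { fix a assume a: "a \<in> (weyl :: 'k wop set)"
    have "gact M u a = gact M e (b \<circ> a)" using b act_comp[OF ec b(1) a] by simp
    then show "gact M u a \<in> ?N" using weyl_mult[OF b(1) a] by blast }
  obtain ns h where "distinct ns" "\<forall>n\<in>set ns. whom n (h n)" "b = sum_list (map h ns)"
    "distinct (map ((+) d) ns)" "\<forall>j\<in>set (map ((+) d) ns). gact M e (h (j - d)) \<in> gdeg M j"
    "gact M e b = gsum M (map (\<lambda>j. gact M e (h (j - d))) (map ((+) d) ns))"
    by (rule act_whom_decomp[OF e b(1)])
  moreover have "\<forall>j\<in>set (map ((+) d) ns). gact M e (h (j - d)) \<in> ?N"
    using \<open>\<forall>n\<in>set ns. whom n (h n)\<close> whom_in_weyl by auto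
  ultimately show "\<exists>js f. distinct js \<and> (\<forall>j\<in>set js. f j \<in> gdeg M j \<inter> ?N) \<and> u = gsum M (map f js)"
    using b(2) by (intro exI[of _ "map ((+) d) ns"] exI[of _ "\<lambda>j. gact M e (h (j - d))"]) blast
qed

lemma gsub_nonzero_homogeneous:
  assumes N: "is_gsub M N" and u: "u \<in> N" "u \<noteq> gzero M"
  shows "\<exists>j v. v \<in> gdeg M j \<and> v \<in> N \<and> v \<noteq> gzero M"
proof -
  obtain js f where f: "distinct js" "\<forall>j\<in>set js. f j \<in> gdeg M j \<inter> N" "u = gsum M (map f js)"
    using N u unfolding is_gsub_def by blast
  show ?thesis
  proof (rule ccontr)
    assume "\<not> ?thesis"
    then have "\<forall>x\<in>set (map f js). x = gzero M" using f(2) by auto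
    then show False using gsum_zeros f(3) u(2) by simp
  qed
qed

lemma carrier_gsub: "is_gsub M (gcar M)"
  unfolding is_gsub_def
proof (intro conjI ballI)
  fix u assume u: "u \<in> gcar M"
  then obtain js f where "distinct js" "\<forall>j\<in>set js. f j \<in> gdeg M j" "u = gsum M (map f js)"
    using homogeneous_decomp by blast
  then show "\<exists>js f. distinct js \<and> (\<forall>j\<in>set js. f j \<in> gdeg M j \<inter> gcar M) \<and> u = gsum M (map f js)"
    using deg_subset by blast
qed (auto simp: zero_closed add_closed act_closed)

lemma simple_generated:
  assumes s: "is_simple M" and e: "e \<in> gdeg M d" "e \<noteq> gzero M"
  shows "{gact M e b | b. b \<in> weyl} = gcar M"
proof -
  have "gact M e id = e" using act_id deg_subset e by blast
  then have "e \<in> {gact M e b | b. b \<in> weyl}" using weyl_id by force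
  moreover have "{gact M e b | b. b \<in> weyl} = {gzero M} \<or> {gact M e b | b. b \<in> weyl} = gcar M"
    using s[unfolded is_simple_def, THEN conjunct2, rule_format, OF cyclic_gsub[OF e(1)]] .
  ultimately show ?thesis using e(2) by blast
qed

lemma simple_nonzero_homogeneous:
  assumes s: "is_simple M" shows "\<exists>d e. e \<in> gdeg M d \<and> e \<noteq> gzero M"
proof -
  obtain u where "u \<in> gcar M" "u \<noteq> gzero M" using s zero_closed unfolding is_simple_def by blast
  then obtain j v where "v \<in> gdeg M j" "v \<in> gcar M" "v \<noteq> gzero M" using gsub_nonzero_homogeneous[OF carrier_gsub] by blast
  then show ?thesis by blast
qed


lemma act_hom_op_0_add: "u \<in> gcar M \<Longrightarrow> gact M u (hom_op 0 (A + B)) = gadd M (gact M u (hom_op 0 A)) (gact M u (hom_op 0 B))"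
  using act_oadd[OF _ hom_op_0_in_weyl hom_op_0_in_weyl, of u A B] by (simp add: hom_op_add oadd_eq_plus)

lemma act_oscal_neq_0:
  assumes u: "u \<in> gcar M" "u \<noteq> gzero M" and c: "c \<noteq> 0"
  shows "gact M u (oscal c) \<noteq> gzero M"
proof
  assume z: "gact M u (oscal c) = gzero M"
  have "gact M u (oscal c \<circ> oscal (inverse c)) = gact M (gact M u (oscal c)) (oscal (inverse c))"
    by (rule act_comp[OF u(1) weyl_sc weyl_sc])
  also have "\<dots> = gzero M" using z zero_act[OF weyl_sc] by simp
  finally show False using oscal_comp_inverse[OF c] act_id[OF u(1)] u(2) by simp
qed

lemma act_diff_eq_0:
  assumes u: "u \<in> gcar M" and A: "A \<in> weyl" and B: "B \<in> weyl" and e: "gact M u A = gact M u B"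
  shows "gact M u (A - B) = gzero M"
proof -
  have Bn: "B \<circ> oscal (-1) = - B" by (rule ext) (simp add: oscal_def weyl_apply_uminus[OF B])
  have "gact M u (A - B) = gact M u (oadd A (B \<circ> oscal (-1)))" by (simp only: Bn oadd_minus)
  also have "\<dots> = gadd M (gact M u A) (gact M u (B \<circ> oscal (-1)))"
    by (rule act_oadd[OF u A weyl_mult[OF B weyl_sc]])
  also have "gact M u (B \<circ> oscal (-1)) = neg (gact M u B)" unfolding neg_def by (rule act_comp[OF u B weyl_sc])
  also have "gadd M (gact M u A) (neg (gact M u B)) = gzero M" using e add_neg[OF act_closed[OF u B]] by simp
  finally show ?thesis .
qed

end

lemma gshift_simps [simp]:
  "gcar (gshift n M) = gcar M" "gadd (gshift n M) = gadd M" "gzero (gshift n M) = gzero M"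
  "gact (gshift n M) = gact M" "gdeg (gshift n M) j = gdeg M (j - n)"
  by (simp_all add: gshift_def)

lemma gsum_shift [simp]: "gsum (gshift n M) = gsum M"
  by (rule ext) (simp add: gsum_def)

lemma gshift_0: "gshift 0 M = M" by (simp add: gshift_def)

lemma gshift_gshift: "gshift n (gshift m M) = gshift (n + m) M"
  by (simp add: gshift_def algebra_simps)

lemma grmod_gshift:
  assumes M: "is_grmod (M :: ('k::field_char_0 wop, 'v) rgr)" shows "is_grmod (gshift n M)"
proof -
  interpret grmod M by (rule grmod.intro[OF M])
  have deg: "\<forall>j. gdeg M (j - n) \<subseteq> gcar M \<and> gzero M \<in> gdeg M (j - n) \<and>
      (\<forall>u\<in>gdeg M (j - n). \<forall>v\<in>gdeg M (j - n). gadd M u v \<in> gdeg M (j - n))"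
    using deg_subset zero_deg add_deg by blast
  have act: "\<forall>j k u a. u \<in> gdeg M (j - n) \<longrightarrow> whom k a \<longrightarrow> gact M u a \<in> gdeg M (j + k - n)"
  proof (intro allI impI)
    fix j k u and a :: "'k wop" assume "u \<in> gdeg M (j - n)" "whom k a"
    then have "gact M u a \<in> gdeg M (j - n + k)" by (rule act_deg)
    then show "gact M u a \<in> gdeg M (j + k - n)" by (simp add: algebra_simps)
  qed
  have decomp: "\<forall>u\<in>gcar M. \<exists>js f. distinct js \<and> (\<forall>j\<in>set js. f j \<in> gdeg M (j - n)) \<and> u = gsum M (map f js)"
  proof
    fix u assume "u \<in> gcar M"
    then obtain js f where f: "distinct js" "\<forall>j\<in>set js. f j \<in> gdeg M j" "u = gsum M (map f js)"
      using homogeneous_decomp by blast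
    have "distinct (map (\<lambda>j. j + n) js)" using f(1) by (simp add: distinct_map)
    moreover have "u = gsum M (map (\<lambda>j. f (j - n)) (map (\<lambda>j. j + n) js))" using f(3) by (simp add: o_def)
    ultimately show "\<exists>js f. distinct js \<and> (\<forall>j\<in>set js. f j \<in> gdeg M (j - n)) \<and> u = gsum M (map f js)"
      using f(2) by (intro exI[of _ "map (\<lambda>j. j + n) js"] exI[of _ "\<lambda>j. f (j - n)"]) auto
  qed
  have indep: "\<forall>js f. distinct js \<longrightarrow> (\<forall>j\<in>set js. f j \<in> gdeg M (j - n)) \<longrightarrow>
      gsum M (map f js) = gzero M \<longrightarrow> (\<forall>j\<in>set js. f j = gzero M)"
  proof (intro allI impI ballI)
    fix js f j assume d: "distinct js" and f: "\<forall>j\<in>set js. f j \<in> gdeg M (j - n)"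
      and z: "gsum M (map f js) = gzero M" and j: "j \<in> set js"
    have "distinct (map (\<lambda>j. j - n) js)" using d by (simp add: distinct_map inj_on_def)
    moreover have "\<forall>i\<in>set (map (\<lambda>j. j - n) js). f (i + n) \<in> gdeg M i" using f by auto
    moreover have "gsum M (map (\<lambda>i. f (i + n)) (map (\<lambda>j. j - n) js)) = gzero M" using z by (simp add: o_def)
    moreover have "j - n \<in> set (map (\<lambda>j. j - n) js)" using j by simp
    ultimately have "f (j - n + n) = gzero M" by (rule homogeneous_indep)
    then show "f j = gzero M" by simp
  qed
  show ?thesis
    using M deg act decomp indep unfolding is_grmod_def gshift_simps gsum_shift by (elim conjE) (intro conjI; assumption)
qed

lemma simple_gshift:
  assumes M: "is_grmod (M :: ('k::field_char_0 wop, 'v) rgr)" and s: "is_simple M" shows "is_simple (gshift n M)"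
  unfolding is_simple_def gshift_simps
proof (intro conjI allI impI)
  show "gcar M \<noteq> {gzero M}" using s unfolding is_simple_def by blast
  fix N assume N: "is_gsub (gshift n M) N"
  have "is_gsub M N"
    unfolding is_gsub_def
  proof (intro conjI ballI)
    show "N \<subseteq> gcar M" "gzero M \<in> N" using N unfolding is_gsub_def by auto
    fix u assume u: "u \<in> N"
    { fix v assume "v \<in> N" then show "gadd M u v \<in> N" using N u unfolding is_gsub_def by auto }
    { fix a :: "'k wop" assume "a \<in> weyl" then show "gact M u a \<in> N" using N u unfolding is_gsub_def by auto }
    obtain js f where f: "distinct js" "\<forall>j\<in>set js. f j \<in> gdeg M (j - n) \<inter> N" "u = gsum M (map f js)"
      using N u unfolding is_gsub_def by auto
    show "\<exists>js f. distinct js \<and> (\<forall>j\<in>set js. f j \<in> gdeg M j \<inter> N) \<and> u = gsum M (map f js)"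
    proof (intro exI conjI)
      show "distinct (map (\<lambda>j. j - n) js)" using f(1) by (simp add: distinct_map inj_on_def)
      show "\<forall>j\<in>set (map (\<lambda>j. j - n) js). f (j + n) \<in> gdeg M j \<inter> N" using f(2) by auto
      show "u = gsum M (map (\<lambda>j. f (j + n)) (map (\<lambda>j. j - n) js))" using f(3) by (simp add: o_def)
    qed
  qed
  then show "N = {gzero M} \<or> N = gcar M" using s unfolding is_simple_def by blast
qed

lemma ghom_zero:
  fixes M :: "('k::field_char_0 wop, 'v) rgr" and N :: "('k wop, 'w) rgr"
  assumes M: "is_grmod M" and N: "is_grmod N" and f: "is_ghom M N f"
  shows "f (gzero M) = gzero N"
proof -
  interpret M: grmod M by unfold_locales (rule M)
  interpret N: grmod N by unfold_locales (rule N)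
  have z: "f (gzero M) \<in> gcar N" using f M.zero_closed unfolding is_ghom_def by blast
  have "f (gzero M) = f (gadd M (gzero M) (gzero M))" using M.zero_add[OF M.zero_closed] by simp
  also have "\<dots> = gadd N (f (gzero M)) (f (gzero M))" using f M.zero_closed unfolding is_ghom_def by blast
  finally show ?thesis using N.add_eq_self_imp_0[OF z z] by simp
qed

definition killed_in_degree :: "('k::field wop, 'v) rgr \<Rightarrow> int \<Rightarrow> 'k wop \<Rightarrow> bool" where
  "killed_in_degree N j r \<longleftrightarrow> (\<exists>v\<in>gdeg N j. v \<noteq> gzero N \<and> gact N v r = gzero N)"

lemma killed_in_degree_gshift: "killed_in_degree (gshift n N) j r \<longleftrightarrow> killed_in_degree N (j - n) r"
  by (simp add: killed_in_degree_def)

lemma g_iso_killed_in_degree: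
  fixes N1 :: "('k::field_char_0 wop, 'v) rgr" and N2 :: "('k wop, 'w) rgr"
  assumes iso: "g_iso N1 N2" and N1: "is_grmod N1" and N2: "is_grmod N2" and r: "r \<in> weyl"
    and killed: "killed_in_degree N1 j r"
  shows "killed_in_degree N2 j r"
proof -
  interpret N1: grmod N1 by unfold_locales (rule N1)
  obtain f where f: "is_ghom N1 N2 f" "bij_betw f (gcar N1) (gcar N2)" using iso unfolding g_iso_def by blast
  obtain u where u: "u \<in> gdeg N1 j" "u \<noteq> gzero N1" "gact N1 u r = gzero N1"
    using killed unfolding killed_in_degree_def by blast
  have uc: "u \<in> gcar N1" using u(1) N1.deg_subset by blast
  have "f u \<in> gdeg N2 j" using f u(1) unfolding is_ghom_def by blast
  moreover have "f u \<noteq> f (gzero N1)" using f(2) uc N1.zero_closed u(2) unfolding bij_betw_def inj_on_def by blast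
  moreover have "gact N2 (f u) r = f (gact N1 u r)" using f uc r unfolding is_ghom_def by metis
  ultimately show ?thesis
    using u(3) ghom_zero[OF N1 N2 f(1)] unfolding killed_in_degree_def by auto
qed

section \<open>Cyclic quotients A/aA\<close>

locale weyl_quotient =
  fixes a :: "'k::field_char_0 wop" and e :: int and G :: "'k poly"
  assumes G_vanishes: "vanishes_below e G" and a_eq_hom_op: "a = hom_op e G"
begin

lemma gen_in_weyl: "a \<in> weyl" using hom_op_in_weyl[OF G_vanishes] a_eq_hom_op by simp

lemma gen_comp_hom_op: "vanishes_below n R \<Longrightarrow> a \<circ> hom_op n R = hom_op (e + n) (R * (G \<circ>\<^sub>p [:- of_int n, 1:]))"
  unfolding a_eq_hom_op by (rule hom_op_comp)

lemma gen_comp_sum: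
  assumes fT: "finite T" and gT: "\<forall>n\<in>T. vanishes_below n (R n)"
  shows "a \<circ> (\<Sum>n\<in>T. hom_op n (R n)) = (\<Sum>m\<in>(\<lambda>n. e + n) ` T. hom_op m (R (m - e) * (G \<circ>\<^sub>p [:- of_int (m - e), 1:])))"
proof -
  have "a \<circ> (\<Sum>n\<in>T. hom_op n (R n)) = (\<Sum>n\<in>T. a \<circ> hom_op n (R n))" unfolding a_eq_hom_op by (rule hom_op_comp_sum)
  also have "\<dots> = (\<Sum>n\<in>T. hom_op (e + n) (R n * (G \<circ>\<^sub>p [:- of_int n, 1:])))"
    by (rule sum.cong[OF refl], rule gen_comp_hom_op) (use gT in auto)
  also have "\<dots> = (\<Sum>m\<in>(\<lambda>n. e + n) ` T. hom_op m (R (m - e) * (G \<circ>\<^sub>p [:- of_int (m - e), 1:])))"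
    by (subst sum.reindex) (auto simp: inj_on_def)
  finally show ?thesis .
qed

lemma hom_op_in_ideal_iff:
  assumes gQ: "vanishes_below d Q"
  shows "(\<exists>c\<in>weyl. hom_op d Q = a \<circ> c) \<longleftrightarrow> (\<exists>R. vanishes_below (d - e) R \<and> (\<forall>x. poly Q x = poly R x * poly G (x - of_int (d - e))))"
proof
  assume "\<exists>c\<in>weyl. hom_op d Q = a \<circ> c"
  then obtain c where c: "c \<in> weyl" "hom_op d Q = a \<circ> c" by blast
  obtain T R where T: "finite T" "\<forall>n\<in>T. vanishes_below n (R n)" "c = (\<Sum>n\<in>T. hom_op n (R n))"
    using weyl_eq_sum_hom_ops[OF c(1)] by blast
  have eq: "(\<Sum>m\<in>(\<lambda>n. e + n) ` T. hom_op m (R (m - e) * (G \<circ>\<^sub>p [:- of_int (m - e), 1:]))) = hom_op d Q"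
    unfolding c(2) T(3) by (rule gen_comp_sum[OF T(1,2), symmetric])
  have gd: "\<forall>m\<in>(\<lambda>n. e + n) ` T. vanishes_below m (R (m - e) * (G \<circ>\<^sub>p [:- of_int (m - e), 1:]))"
  proof
    fix m assume "m \<in> (\<lambda>n. e + n) ` T"
    then have "m - e \<in> T" by auto
    then have "vanishes_below (e + (m - e)) (R (m - e) * (G \<circ>\<^sub>p [:- of_int (m - e), 1:]))"
      using T(2) vanishes_below_comp[OF G_vanishes] by blast
    then show "vanishes_below m (R (m - e) * (G \<circ>\<^sub>p [:- of_int (m - e), 1:]))" by simp
  qed
  have fi: "finite ((\<lambda>n. e + n) ` T)" using T(1) by simp
  have Qe: "Q = (if d \<in> (\<lambda>n. e + n) ` T then R (d - e) * (G \<circ>\<^sub>p [:- of_int (d - e), 1:]) else 0)"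
    using sum_hom_ops_component_eq[of "{d}" _ "\<lambda>_. Q", OF _ fi _ gd] gQ eq by simp
  show "\<exists>R. vanishes_below (d - e) R \<and> (\<forall>x. poly Q x = poly R x * poly G (x - of_int (d - e)))"
  proof (cases "d \<in> (\<lambda>n. e + n) ` T")
    case True
    then have "d - e \<in> T" by auto
    have "\<forall>x. poly Q x = poly (R (d - e)) x * poly G (x - of_int (d - e))"
      using Qe True by (simp add: poly_pcompose algebra_simps)
    then show ?thesis using \<open>d - e \<in> T\<close> T(2) by blast
  next
    case False
    then show ?thesis using Qe by (intro exI[of _ 0]) (simp add: vanishes_below_0)
  qed
next
  assume "\<exists>R. vanishes_below (d - e) R \<and> (\<forall>x. poly Q x = poly R x * poly G (x - of_int (d - e)))"
  then obtain R where R: "vanishes_below (d - e) R" "\<forall>x. poly Q x = poly R x * poly G (x - of_int (d - e))" by blast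
  have "a \<circ> hom_op (d - e) R = hom_op (e + (d - e)) (R * (G \<circ>\<^sub>p [:- of_int (d - e), 1:]))" by (rule gen_comp_hom_op[OF R(1)])
  also have "\<dots> = hom_op d Q" by (rule hom_op_cong) (simp_all add: R(2) poly_pcompose algebra_simps)
  finally have "hom_op d Q = a \<circ> hom_op (d - e) R" by simp
  then show "\<exists>c\<in>weyl. hom_op d Q = a \<circ> c" using hom_op_in_weyl[OF R(1)] by blast
qed

lemma wcoset_mem: "b \<in> weyl \<Longrightarrow> b \<in> wcoset a b"
  unfolding wcoset_def using weyl_comp_0[OF gen_in_weyl] weyl_0 by (force simp: oadd_eq_plus)

lemma wcoset_eq_iff:
  assumes b: "b \<in> weyl" and b': "b' \<in> weyl"
  shows "wcoset a b = wcoset a b' \<longleftrightarrow> (\<exists>c\<in>weyl. b' = b + (a \<circ> c))"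
proof
  assume "wcoset a b = wcoset a b'"
  then have "b' \<in> wcoset a b" using wcoset_mem[OF b'] by simp
  then show "\<exists>c\<in>weyl. b' = b + (a \<circ> c)" unfolding wcoset_def by (auto simp: oadd_eq_plus)
next
  assume "\<exists>c\<in>weyl. b' = b + (a \<circ> c)"
  then obtain c where c: "c \<in> weyl" "b' = b + (a \<circ> c)" by blast
  show "wcoset a b = wcoset a b'"
  proof (rule set_eqI)
    fix x
    show "x \<in> wcoset a b \<longleftrightarrow> x \<in> wcoset a b'"
    proof
      assume "x \<in> wcoset a b"
      then obtain c' where c': "c' \<in> weyl" "x = b + (a \<circ> c')" unfolding wcoset_def by (auto simp: oadd_eq_plus)
      have "x = b' + (a \<circ> (c' - c))" using c c' weyl_comp_diff[OF gen_in_weyl, of c' c] by (simp add: algebra_simps)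
      then show "x \<in> wcoset a b'" unfolding wcoset_def using weyl_diff[OF c'(1) c(1)] by (auto simp: oadd_eq_plus)
    next
      assume "x \<in> wcoset a b'"
      then obtain c' where c': "c' \<in> weyl" "x = b' + (a \<circ> c')" unfolding wcoset_def by (auto simp: oadd_eq_plus)
      have "x = b + (a \<circ> (c + c'))" using c c' weyl_comp_add[OF gen_in_weyl, of c c'] by (simp add: algebra_simps)
      then show "x \<in> wcoset a b" unfolding wcoset_def using weyl_plus[OF c(1) c'(1)] by (auto simp: oadd_eq_plus)
    qed
  qed
qed

lemma wcoset_some_rep: assumes b: "b \<in> weyl"
  shows "\<exists>c\<in>weyl. (SOME x. x \<in> wcoset a b) = b + (a \<circ> c)"
proof -
  have "(SOME x. x \<in> wcoset a b) \<in> wcoset a b" using someI[of "\<lambda>x. x \<in> wcoset a b" b] wcoset_mem[OF b] by blast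
  then show ?thesis unfolding wcoset_def by (auto simp: oadd_eq_plus)
qed

lemma wcoset_some: assumes b: "b \<in> weyl"
  shows "(SOME x. x \<in> wcoset a b) \<in> weyl" "wcoset a (SOME x. x \<in> wcoset a b) = wcoset a b"
proof -
  obtain c where c: "c \<in> weyl" "(SOME x. x \<in> wcoset a b) = b + (a \<circ> c)" using wcoset_some_rep[OF b] by blast
  show s: "(SOME x. x \<in> wcoset a b) \<in> weyl" unfolding c(2) by (intro weyl_plus b weyl_mult[OF gen_in_weyl c(1)])
  have "wcoset a b = wcoset a (SOME x. x \<in> wcoset a b)" using wcoset_eq_iff[OF b s] c by blast
  then show "wcoset a (SOME x. x \<in> wcoset a b) = wcoset a b" by simp
qed

lemma wcoset_eq_iff_diff: "b \<in> weyl \<Longrightarrow> b' \<in> weyl \<Longrightarrow> wcoset a b = wcoset a b' \<longleftrightarrow> wcoset a (b - b') = wcoset a 0"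
proof -
  assume b: "b \<in> weyl" and b': "b' \<in> weyl"
  have d: "b - b' \<in> weyl" using weyl_diff[OF b b'] .
  have "wcoset a b = wcoset a b' \<longleftrightarrow> (\<exists>c\<in>weyl. b' = b + (a \<circ> c))" by (rule wcoset_eq_iff[OF b b'])
  also have "\<dots> \<longleftrightarrow> (\<exists>c\<in>weyl. 0 = (b - b') + (a \<circ> c))"
    by (intro bex_cong refl) (auto simp: algebra_simps)
  also have "\<dots> \<longleftrightarrow> wcoset a (b - b') = wcoset a 0" using wcoset_eq_iff[OF d weyl_0] by simp
  finally show ?thesis .
qed

abbreviation "Q \<equiv> qmod a"

lemma qmod_add: "b \<in> weyl \<Longrightarrow> b' \<in> weyl \<Longrightarrow> gadd Q (wcoset a b) (wcoset a b') = wcoset a (b + b')"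
proof -
  assume b: "b \<in> weyl" and b': "b' \<in> weyl"
  let ?s = "SOME x. x \<in> wcoset a b" and ?s' = "SOME x. x \<in> wcoset a b'"
  obtain c where c: "c \<in> weyl" "?s = b + (a \<circ> c)" using wcoset_some_rep[OF b] by blast
  obtain c' where c': "c' \<in> weyl" "?s' = b' + (a \<circ> c')" using wcoset_some_rep[OF b'] by blast
  have "?s + ?s' = (b + b') + (a \<circ> (c + c'))" using c c' weyl_comp_add[OF gen_in_weyl, of c c'] by (simp add: algebra_simps)
  then have "\<exists>c\<in>weyl. ?s + ?s' = (b + b') + (a \<circ> c)" using weyl_plus[OF c(1) c'(1)] by blast
  then have "wcoset a (b + b') = wcoset a (?s + ?s')"
    using wcoset_eq_iff[OF weyl_plus[OF b b'] weyl_plus[OF wcoset_some(1)[OF b] wcoset_some(1)[OF b']]] by blast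
  then show ?thesis by (simp add: qmod_def oadd_eq_plus)
qed

lemma qmod_act: "b \<in> weyl \<Longrightarrow> r \<in> weyl \<Longrightarrow> gact Q (wcoset a b) r = wcoset a (b \<circ> r)"
proof -
  assume b: "b \<in> weyl" and r: "r \<in> weyl"
  let ?s = "SOME x. x \<in> wcoset a b"
  obtain c where c: "c \<in> weyl" "?s = b + (a \<circ> c)" using wcoset_some_rep[OF b] by blast
  have "?s \<circ> r = (b \<circ> r) + (a \<circ> (c \<circ> r))" using c by (auto simp: fun_eq_iff)
  then have "\<exists>c\<in>weyl. ?s \<circ> r = (b \<circ> r) + (a \<circ> c)" using weyl_mult[OF c(1) r] by blast
  then have "wcoset a (b \<circ> r) = wcoset a (?s \<circ> r)"
    using wcoset_eq_iff[OF weyl_mult[OF b r] weyl_mult[OF wcoset_some(1)[OF b] r]] by blast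
  then show ?thesis by (simp add: qmod_def)
qed

lemma qmod_zero: "gzero Q = wcoset a 0"
proof -
  have "gzero Q = wcoset a ozero" by (simp add: qmod_def)
  then show ?thesis by (simp only: ozero_eq_0)
qed
lemma qmod_car: "gcar Q = {wcoset a b | b. b \<in> weyl}" by (simp add: qmod_def)
lemma qmod_deg: "gdeg Q j = {wcoset a b | b. whom j b}" by (simp add: qmod_def)

lemma qmod_gsum: "(\<forall>j\<in>set js. h j \<in> weyl) \<Longrightarrow> gsum Q (map (\<lambda>j. wcoset a (h j)) js) = wcoset a (sum_list (map h js))"
proof (induct js)
  case Nil
  have "gsum Q [] = gzero Q" by (simp add: gsum_def)
  then show ?case by (simp only: list.map sum_list.Nil qmod_zero)
next
  case (Cons j js)
  have s: "sum_list (map h js) \<in> weyl" using Cons(2) by (induct js) (auto simp: weyl_0 weyl_plus)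
  have "gsum Q (map (\<lambda>j. wcoset a (h j)) (j # js)) = gadd Q (wcoset a (h j)) (gsum Q (map (\<lambda>j. wcoset a (h j)) js))"
    by (simp add: gsum_def)
  also have "\<dots> = gadd Q (wcoset a (h j)) (wcoset a (sum_list (map h js)))" using Cons by simp
  also have "\<dots> = wcoset a (h j + sum_list (map h js))" using qmod_add Cons(2) s by simp
  finally show ?case by (simp only: list.map sum_list.Cons)
qed

lemma wcoset_eq_0_iff: "b \<in> weyl \<Longrightarrow> wcoset a b = wcoset a 0 \<longleftrightarrow> (\<exists>c\<in>weyl. b = a \<circ> c)"
  using wcoset_eq_iff[OF weyl_0, of b] by auto

lemma sum_hom_ops_in_ideal:
  assumes S: "finite S" "\<forall>j\<in>S. vanishes_below j (P j)" and c: "c \<in> weyl"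
    and eq: "(\<Sum>j\<in>S. hom_op j (P j)) = a \<circ> c" and j0: "j0 \<in> S"
  shows "\<exists>c'\<in>weyl. hom_op j0 (P j0) = a \<circ> c'"
proof -
  obtain T R where T: "finite T" "\<forall>n\<in>T. vanishes_below n (R n)" "c = (\<Sum>n\<in>T. hom_op n (R n))"
    using weyl_eq_sum_hom_ops[OF c] by blast
  let ?R = "\<lambda>m. R (m - e) * (G \<circ>\<^sub>p [:- of_int (m - e), 1:])"
  have eq': "(\<Sum>j\<in>S. hom_op j (P j)) = (\<Sum>m\<in>(+) e ` T. hom_op m (?R m))"
    unfolding eq T(3) by (rule gen_comp_sum[OF T(1,2)])
  have R: "\<forall>m\<in>(+) e ` T. vanishes_below m (?R m)"
    using vanishes_below_comp[OF G_vanishes] T(2) by fastforce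
  have P0: "P j0 = (if j0 \<in> (+) e ` T then ?R j0 else 0)"
    by (rule sum_hom_ops_component_eq[OF S(1) _ S(2) R eq' j0]) (use T(1) in simp)
  show ?thesis
  proof (cases "j0 \<in> (+) e ` T")
    case True
    then have t: "j0 - e \<in> T" by auto
    have "a \<circ> hom_op (j0 - e) (R (j0 - e)) = hom_op (e + (j0 - e)) (?R j0)"
      using T(2) t by (intro gen_comp_hom_op) auto
    then have "hom_op j0 (P j0) = a \<circ> hom_op (j0 - e) (R (j0 - e))" using P0 True by simp
    then show ?thesis using hom_op_in_weyl[OF T(2)[rule_format, OF t]] by blast
  next
    case False
    then have "hom_op j0 (P j0) = a \<circ> 0" using P0 weyl_comp_0[OF gen_in_weyl] by (simp add: hom_op_0)
    then show ?thesis using weyl_0 by blast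
  qed
qed

lemma qmod_homogeneous_indep:
  assumes d: "distinct js" and f: "\<forall>j\<in>set js. f j \<in> gdeg Q j" and z: "gsum Q (map f js) = gzero Q"
    and j0: "j0 \<in> set js"
  shows "f j0 = gzero Q"
proof -
  define P where "P j = (SOME P. vanishes_below j P \<and> f j = wcoset a (hom_op j P))" for j
  have P: "vanishes_below j (P j) \<and> f j = wcoset a (hom_op j (P j))" if "j \<in> set js" for j
  proof -
    have "\<exists>b. whom j b \<and> f j = wcoset a b" using f that by (auto simp: qmod_deg)
    then have "\<exists>P. vanishes_below j P \<and> f j = wcoset a (hom_op j P)" by (metis whom_imp_hom_op)
    then show ?thesis unfolding P_def by (rule someI_ex)
  qed
  have hw: "\<forall>j\<in>set js. hom_op j (P j) \<in> weyl" using P hom_op_in_weyl by blast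
  have fP: "map f js = map (\<lambda>j. wcoset a (hom_op j (P j))) js" using P by (auto intro!: map_cong)
  have "wcoset a (\<Sum>j\<in>set js. hom_op j (P j)) = wcoset a (sum_list (map (\<lambda>j. hom_op j (P j)) js))"
    by (simp add: sum_list_distinct_conv_sum_set[OF d])
  also have "\<dots> = gsum Q (map f js)" unfolding fP by (rule qmod_gsum[OF hw, symmetric])
  also have "\<dots> = wcoset a 0" using z by (simp add: qmod_zero)
  finally have "wcoset a (\<Sum>j\<in>set js. hom_op j (P j)) = wcoset a 0" .
  moreover have "(\<Sum>j\<in>set js. hom_op j (P j)) \<in> weyl" using hw by (simp add: weyl_sum)
  ultimately obtain c where c: "c \<in> weyl" "(\<Sum>j\<in>set js. hom_op j (P j)) = a \<circ> c"
    using wcoset_eq_0_iff by blast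
  have "\<forall>j\<in>set js. vanishes_below j (P j)" using P by blast
  then have "\<exists>c'\<in>weyl. hom_op j0 (P j0) = a \<circ> c'"
    by (rule sum_hom_ops_in_ideal[OF finite_set _ c j0])
  then show ?thesis using P[OF j0] wcoset_eq_0_iff[OF hw[rule_format, OF j0]] qmod_zero by simp
qed

lemma qmod_act_oadd:
  assumes u: "u \<in> gcar Q" and r: "r \<in> weyl" and s: "s \<in> weyl"
  shows "gact Q u (oadd r s) = gadd Q (gact Q u r) (gact Q u s)"
proof -
  obtain b where b: "b \<in> weyl" "u = wcoset a b" using u by (auto simp: qmod_car)
  have "gact Q u (oadd r s) = wcoset a (b \<circ> (r + s))" using b qmod_act[OF b(1) weyl_add[OF r s]] by (simp add: oadd_eq_plus)
  also have "\<dots> = wcoset a ((b \<circ> r) + (b \<circ> s))" by (subst weyl_comp_add[OF b(1)]) (rule refl)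
  also have "\<dots> = gadd Q (gact Q u r) (gact Q u s)"
    using qmod_add[OF weyl_mult[OF b(1) r] weyl_mult[OF b(1) s]] qmod_act[OF b(1) r] qmod_act[OF b(1) s] b(2) by simp
  finally show ?thesis .
qed

lemma qmod_add_act:
  assumes u: "u \<in> gcar Q" and v: "v \<in> gcar Q" and r: "r \<in> weyl"
  shows "gact Q (gadd Q u v) r = gadd Q (gact Q u r) (gact Q v r)"
proof -
  obtain b where b: "b \<in> weyl" "u = wcoset a b" using u by (auto simp: qmod_car)
  obtain b' where b': "b' \<in> weyl" "v = wcoset a b'" using v by (auto simp: qmod_car)
  have "gact Q (gadd Q u v) r = wcoset a ((b + b') \<circ> r)"
    using b b' qmod_add[OF b(1) b'(1)] qmod_act[OF weyl_plus[OF b(1) b'(1)] r] by simp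
  also have "(b + b') \<circ> r = (b \<circ> r) + (b' \<circ> r)" by (rule ext) simp
  also have "wcoset a ((b \<circ> r) + (b' \<circ> r)) = gadd Q (gact Q u r) (gact Q v r)"
    using b b' qmod_add[OF weyl_mult[OF b(1) r] weyl_mult[OF b'(1) r]] qmod_act[OF b(1) r] qmod_act[OF b'(1) r] by simp
  finally show ?thesis .
qed

lemma qmod_homogeneous_decomp:
  assumes "u \<in> gcar Q"
  shows "\<exists>js f. distinct js \<and> (\<forall>j\<in>set js. f j \<in> gdeg Q j) \<and> u = gsum Q (map f js)"
proof -
  obtain b where b: "b \<in> weyl" "u = wcoset a b" using assms by (auto simp: qmod_car)
  obtain ns h where ns: "distinct ns" "\<forall>n\<in>set ns. whom n (h n)" "b = sum_list (map h ns)"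
    using weyl_eq_sum_list_whom[OF b(1)] by blast
  have hw: "\<forall>j\<in>set ns. h j \<in> weyl" using ns(2) whom_in_weyl by blast
  have "u = gsum Q (map (\<lambda>j. wcoset a (h j)) ns)" using qmod_gsum[OF hw] b(2) ns(3) by simp
  then show ?thesis
    using ns by (intro exI[of _ ns] exI[of _ "\<lambda>j. wcoset a (h j)"]) (auto simp: qmod_deg)
qed

lemma qmod_add_deg:
  assumes "u \<in> gdeg Q j" "v \<in> gdeg Q j" shows "gadd Q u v \<in> gdeg Q j"
proof -
  obtain b b' where bb: "whom j b" "u = wcoset a b" "whom j b'" "v = wcoset a b'"
    using assms by (auto simp: qmod_deg)
  then have "gadd Q u v = wcoset a (b + b')" using qmod_add[OF whom_in_weyl[OF bb(1)] whom_in_weyl[OF bb(3)]] by simp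
  moreover have "whom j (b + b')" using whom_add[OF bb(1) bb(3)] by (simp add: oadd_eq_plus)
  ultimately show ?thesis by (auto simp: qmod_deg)
qed

lemma qmod_act_deg:
  assumes "u \<in> gdeg Q j" and r: "whom n r" shows "gact Q u r \<in> gdeg Q (j + n)"
proof -
  obtain b where bb: "whom j b" "u = wcoset a b" using assms(1) by (auto simp: qmod_deg)
  have "gact Q u r = wcoset a (b \<circ> r)" using qmod_act[OF whom_in_weyl[OF bb(1)] whom_in_weyl[OF r]] bb(2) by simp
  moreover have "whom (j + n) (b \<circ> r)" by (rule whom_mult[OF bb(1) r])
  ultimately show ?thesis by (auto simp: qmod_deg)
qed

lemma qmod_grmod: "is_grmod Q"
  unfolding is_grmod_def
proof (intro conjI)
  show "gzero Q \<in> gcar Q" using qmod_zero weyl_0 by (auto simp: qmod_car)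
  show "\<forall>u\<in>gcar Q. \<forall>v\<in>gcar Q. gadd Q u v \<in> gcar Q" by (auto simp: qmod_car qmod_add) (blast intro: weyl_plus)
  show "\<forall>u\<in>gcar Q. \<forall>v\<in>gcar Q. \<forall>w\<in>gcar Q. gadd Q (gadd Q u v) w = gadd Q u (gadd Q v w)"
    by (auto simp: qmod_car qmod_add weyl_plus add.assoc)
  show "\<forall>u\<in>gcar Q. \<forall>v\<in>gcar Q. gadd Q u v = gadd Q v u"
    by (auto simp: qmod_car qmod_add add.commute)
  show "\<forall>u\<in>gcar Q. gadd Q (gzero Q) u = u"
    by (auto simp: qmod_car qmod_add qmod_zero weyl_0)
  show "\<forall>u\<in>gcar Q. \<exists>v\<in>gcar Q. gadd Q u v = gzero Q"
  proof
    fix u assume "u \<in> gcar Q"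
    then obtain b where b: "b \<in> weyl" "u = wcoset a b" by (auto simp: qmod_car)
    have "gadd Q u (wcoset a (- b)) = gzero Q" using qmod_add[OF b(1) weyl_uminus[OF b(1)]] b(2) qmod_zero by simp
    moreover have "wcoset a (- b) \<in> gcar Q" using weyl_uminus[OF b(1)] by (auto simp: qmod_car)
    ultimately show "\<exists>v\<in>gcar Q. gadd Q u v = gzero Q" by blast
  qed
  show "\<forall>u\<in>gcar Q. \<forall>r\<in>weyl. gact Q u r \<in> gcar Q"
    by (auto simp: qmod_car qmod_act weyl_mult)
  show "\<forall>u\<in>gcar Q. \<forall>r\<in>weyl. \<forall>s\<in>weyl. gact Q u (oadd r s) = gadd Q (gact Q u r) (gact Q u s)"
    using qmod_act_oadd by blast
  show "\<forall>u\<in>gcar Q. \<forall>v\<in>gcar Q. \<forall>r\<in>weyl. gact Q (gadd Q u v) r = gadd Q (gact Q u r) (gact Q v r)"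
    using qmod_add_act by blast
  show "\<forall>u\<in>gcar Q. \<forall>r\<in>weyl. \<forall>s\<in>weyl. gact Q u (r \<circ> s) = gact Q (gact Q u r) s"
    by (auto simp: qmod_car qmod_act weyl_mult o_assoc)
  show "\<forall>u\<in>gcar Q. gact Q u (\<lambda>p. p) = u"
  proof
    fix u assume "u \<in> gcar Q"
    then obtain b where b: "b \<in> weyl" "u = wcoset a b" by (auto simp: qmod_car)
    have "(\<lambda>p. p) \<in> (weyl :: 'k wop set)" using weyl_id by (simp add: id_def)
    then show "gact Q u (\<lambda>p. p) = u" using b qmod_act by (simp add: o_def)
  qed
  show "\<forall>j. gdeg Q j \<subseteq> gcar Q \<and> gzero Q \<in> gdeg Q j \<and> (\<forall>u\<in>gdeg Q j. \<forall>v\<in>gdeg Q j. gadd Q u v \<in> gdeg Q j)"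
  proof (intro allI conjI)
    fix j
    show "gdeg Q j \<subseteq> gcar Q" using whom_in_weyl by (auto simp: qmod_deg qmod_car)
    show "gzero Q \<in> gdeg Q j" using whom_0 qmod_zero by (auto simp: qmod_deg)
    show "\<forall>u\<in>gdeg Q j. \<forall>v\<in>gdeg Q j. gadd Q u v \<in> gdeg Q j" using qmod_add_deg by blast
  qed
  show "\<forall>j n u r. u \<in> gdeg Q j \<longrightarrow> whom n r \<longrightarrow> gact Q u r \<in> gdeg Q (j + n)"
    using qmod_act_deg by blast
  show "\<forall>u\<in>gcar Q. \<exists>js f. distinct js \<and> (\<forall>j\<in>set js. f j \<in> gdeg Q j) \<and> u = gsum Q (map f js)"
    using qmod_homogeneous_decomp by blast
  show "\<forall>js f. distinct js \<longrightarrow> (\<forall>j\<in>set js. f j \<in> gdeg Q j) \<longrightarrow> gsum Q (map f js) = gzero Q \<longrightarrow> (\<forall>j\<in>set js. f j = gzero Q)"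
    using qmod_homogeneous_indep by blast
qed

lemma qmod_simpleI:
  assumes nz: "wcoset a id \<noteq> wcoset a 0"
    and gen: "\<And>j b. whom j b \<Longrightarrow> wcoset a b \<noteq> wcoset a 0 \<Longrightarrow> \<exists>c\<in>weyl. \<exists>t. t \<noteq> 0 \<and> wcoset a (b \<circ> c) = wcoset a (oscal t)"
  shows "is_simple Q"
  unfolding is_simple_def
proof (intro conjI allI impI)
  interpret G: grmod Q by unfold_locales (rule qmod_grmod)
  have idc: "wcoset a id \<in> gcar Q" using weyl_id by (auto simp: qmod_car)
  then show "gcar Q \<noteq> {gzero Q}" using nz qmod_zero by auto
  fix N assume N: "is_gsub Q N"
  show "N = {gzero Q} \<or> N = gcar Q"
  proof (cases "N = {gzero Q}")
    case True then show ?thesis by simp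
  next
    case False
    have Nsub: "N \<subseteq> gcar Q" and Nz: "gzero Q \<in> N" and Nact: "\<forall>u\<in>N. \<forall>r\<in>weyl. gact Q u r \<in> N"
      using N unfolding is_gsub_def by blast+
    obtain u where u: "u \<in> N" "u \<noteq> gzero Q" using False Nz by blast
    obtain j v where v: "v \<in> gdeg Q j" "v \<in> N" "v \<noteq> gzero Q" using G.gsub_nonzero_homogeneous[OF N u] by blast
    obtain b where b: "whom j b" "v = wcoset a b" using v(1) by (auto simp: qmod_deg)
    have bw: "b \<in> weyl" using whom_in_weyl[OF b(1)] .
    obtain c t where ct: "c \<in> weyl" "t \<noteq> 0" "wcoset a (b \<circ> c) = wcoset a (oscal t)"
      using gen[OF b(1)] v(3) b(2) qmod_zero by auto
    have "gact Q v c \<in> N" using Nact v(2) ct(1) by blast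
    then have "wcoset a (oscal t) \<in> N" using qmod_act[OF bw ct(1)] b(2) ct(3) by simp
    then have "gact Q (wcoset a (oscal t)) (oscal (inverse t)) \<in> N" using Nact weyl_sc by blast
    then have idN: "wcoset a id \<in> N" using qmod_act[OF weyl_sc weyl_sc] oscal_comp_inverse[OF ct(2)] by simp
    have "gcar Q \<subseteq> N"
    proof
      fix w assume "w \<in> gcar Q"
      then obtain r where r: "r \<in> weyl" "w = wcoset a r" by (auto simp: qmod_car)
      have "gact Q (wcoset a id) r \<in> N" using Nact idN r(1) by blast
      then show "w \<in> N" using qmod_act[OF weyl_id r(1)] r(2) by simp
    qed
    then show ?thesis using Nsub by blast
  qed
qed

lemma wcoset_eq_0_iff_linear:
  assumes G: "G = [:g, 1:]" and e: "0 \<le> e" and g: "g \<notin> of_int ` {0<..}"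
    and P: "vanishes_below d P"
  shows "wcoset a (hom_op d P) = wcoset a 0 \<longleftrightarrow> poly P (of_int (d - e) - g) = 0"
proof -
  let ?r = "of_int (d - e) - g"
  have "wcoset a (hom_op d P) = wcoset a 0 \<longleftrightarrow> (\<exists>c\<in>weyl. hom_op d P = a \<circ> c)"
    by (rule wcoset_eq_0_iff[OF hom_op_in_weyl[OF P]])
  also have "\<dots> \<longleftrightarrow> (\<exists>R. vanishes_below (d - e) R \<and> (\<forall>x. poly P x = poly R x * poly G (x - of_int (d - e))))"
    by (rule hom_op_in_ideal_iff[OF P])
  also have "\<dots> \<longleftrightarrow> poly P ?r = 0"
  proof
    assume "\<exists>R. vanishes_below (d - e) R \<and> (\<forall>x. poly P x = poly R x * poly G (x - of_int (d - e)))"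
    then obtain R where R: "\<forall>x. poly P x = poly R x * poly G (x - of_int (d - e))" by blast
    show "poly P ?r = 0" using R[rule_format, of ?r] G by simp
  next
    assume "poly P ?r = 0"
    then obtain R where R: "P = [:- ?r, 1:] * R" using poly_eq_0_iff_dvd by (metis dvdE)
    have "vanishes_below (d - e) R"
      unfolding vanishes_below_def
    proof (intro allI impI)
      fix i :: nat assume i: "int i < d - e"
      then have "poly P (of_nat i) = 0" using P e by (simp add: vanishes_below_def)
      moreover have "of_nat i - ?r \<noteq> 0"
      proof
        assume "of_nat i - ?r = 0"
        then have "g = of_int (d - e - int i)" by (simp add: algebra_simps)
        moreover have "d - e - int i \<in> {0<..}" using i by simp
        ultimately show False using g by blast
      qed
      moreover have "poly P (of_nat i) = (of_nat i - ?r) * poly R (of_nat i)"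
        unfolding R by (simp add: algebra_simps)
      ultimately show "poly R (of_nat i) = 0" by simp
    qed
    moreover have "\<forall>x. poly P x = poly R x * poly G (x - of_int (d - e))" using G R by (simp add: algebra_simps)
    ultimately show "\<exists>R. vanishes_below (d - e) R \<and> (\<forall>x. poly P x = poly R x * poly G (x - of_int (d - e)))" by blast
  qed
  finally show ?thesis .
qed

lemma wcoset_eq_0_iff_unit:
  assumes G: "G = 1" and e: "e = -1" and P: "vanishes_below d P"
  shows "wcoset a (hom_op d P) = wcoset a 0 \<longleftrightarrow> (0 \<le> d \<longrightarrow> poly P (of_int d) = 0)"
proof -
  have "wcoset a (hom_op d P) = wcoset a 0 \<longleftrightarrow> (\<exists>c\<in>weyl. hom_op d P = a \<circ> c)"
    by (rule wcoset_eq_0_iff[OF hom_op_in_weyl[OF P]])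
  also have "\<dots> \<longleftrightarrow> (\<exists>R. vanishes_below (d - e) R \<and> (\<forall>x. poly P x = poly R x * poly G (x - of_int (d - e))))"
    by (rule hom_op_in_ideal_iff[OF P])
  also have "\<dots> \<longleftrightarrow> vanishes_below (d + 1) P"
    using G e by (auto simp: vanishes_below_def)
  also have "\<dots> \<longleftrightarrow> (0 \<le> d \<longrightarrow> poly P (of_int d) = 0)"
    by (rule vanishes_below_succ_iff[OF P])
  finally show ?thesis .
qed

lemma wcoset_hom_op_0_eq_const:
  assumes crit: "\<And>P. wcoset a (hom_op 0 P) = wcoset a 0 \<longleftrightarrow> poly P r = 0"
  shows "wcoset a (hom_op 0 T) = wcoset a (oscal (poly T r))"
proof -
  have "wcoset a (hom_op 0 (T - [:poly T r:])) = wcoset a 0" using crit by simp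
  then have "wcoset a (hom_op 0 T - oscal (poly T r)) = wcoset a 0" by (simp add: hom_op_diff oscal_eq_hom_op)
  then show ?thesis using wcoset_eq_iff_diff[OF hom_op_0_in_weyl weyl_sc] by simp
qed

lemma qmod_simple_linear:
  assumes G: "G = [:g, 1:]" and e: "0 \<le> e" and g: "g \<notin> of_int ` {0<..}"
    and g_e: "\<And>i::nat. of_int (- e) - g \<noteq> of_nat i"
  shows "is_simple Q"
proof (rule qmod_simpleI)
  note crit = wcoset_eq_0_iff_linear[OF G e g]
  show "wcoset a id \<noteq> wcoset a 0"
    unfolding id_eq_hom_op using crit[OF vanishes_below_at_0] by simp
  fix j b assume b: "whom j b" "wcoset a b \<noteq> wcoset a 0"
  obtain P where P: "vanishes_below j P" "b = hom_op j P" using whom_imp_hom_op[OF b(1)] by blast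
  have P_nz: "poly P (of_int (j - e) - g) \<noteq> 0" using crit[OF P(1)] b(2) P(2) by simp
  \<comment> \<open>right multiplication by y^j, or by x^(-j) when j < 0, moves b to degree 0 without killing it\<close>
  define F where "F = (falling_poly (nat (- j)) :: 'k poly)"
  have F: "vanishes_below (- j) F"
    using vanishes_below_falling_poly[of "nat (- j)"] vanishes_below_nonpos[of "- j" F]
    unfolding F_def by (cases "0 \<le> j") simp_all
  define T where "T = F * (P \<circ>\<^sub>p [:- of_int (- j), 1:])"
  have "b \<circ> hom_op (- j) F = hom_op 0 T"
    using hom_op_comp[OF F, of j P] unfolding P(2) T_def by simp
  then have "wcoset a (b \<circ> hom_op (- j) F) = wcoset a (oscal (poly T (of_int (- e) - g)))"
    using wcoset_hom_op_0_eq_const crit[OF vanishes_below_at_0] by simp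
  moreover have "poly T (of_int (- e) - g) \<noteq> 0"
    using P_nz poly_falling_poly_neq_0[of "of_int (- e) - g"] g_e
    unfolding T_def F_def by (simp add: poly_pcompose algebra_simps)
  ultimately show "\<exists>c\<in>weyl. \<exists>t. t \<noteq> 0 \<and> wcoset a (b \<circ> c) = wcoset a (oscal t)"
    using hom_op_in_weyl[OF F] by blast
qed

lemma qmod_simple_unit:
  assumes G: "G = 1" and e: "e = -1"
  shows "is_simple Q"
proof (rule qmod_simpleI)
  note crit = wcoset_eq_0_iff_unit[OF G e]
  show "wcoset a id \<noteq> wcoset a 0"
    unfolding id_eq_hom_op using crit[OF vanishes_below_at_0] by simp
  fix j b assume b: "whom j b" "wcoset a b \<noteq> wcoset a 0"
  obtain P where P: "vanishes_below j P" "b = hom_op j P" using whom_imp_hom_op[OF b(1)] by blast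
  have P_nz: "0 \<le> j" "poly P (of_int j) \<noteq> 0" using crit[OF P(1)] b(2) P(2) by simp_all
  have one: "vanishes_below (- j) (1 :: 'k poly)" by (rule vanishes_below_nonpos) (use P_nz in simp)
  define T where "T = (1 :: 'k poly) * (P \<circ>\<^sub>p [:- of_int (- j), 1:])"
  have "b \<circ> hom_op (- j) 1 = hom_op 0 T"
    using hom_op_comp[OF one, of j P] unfolding P(2) T_def by simp
  then have "wcoset a (b \<circ> hom_op (- j) 1) = wcoset a (oscal (poly T 0))"
    using wcoset_hom_op_0_eq_const crit[OF vanishes_below_at_0] by simp
  moreover have "poly T 0 \<noteq> 0" using P_nz unfolding T_def by (simp add: poly_pcompose)
  ultimately show "\<exists>c\<in>weyl. \<exists>t. t \<noteq> 0 \<and> wcoset a (b \<circ> c) = wcoset a (oscal t)"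
    using hom_op_in_weyl[OF one] by blast
qed

lemma qmod_deg_eq_hom_op: "v \<in> gdeg Q d \<Longrightarrow> r \<in> weyl \<Longrightarrow>
  \<exists>P. vanishes_below d P \<and> v = wcoset a (hom_op d P) \<and> gact Q v r = wcoset a (hom_op d P \<circ> r)"
proof -
  assume v: "v \<in> gdeg Q d" and r: "r \<in> weyl"
  obtain b where b: "whom d b" "v = wcoset a b" using v by (auto simp: qmod_deg)
  obtain P where P: "vanishes_below d P" "b = hom_op d P" using whom_imp_hom_op[OF b(1)] by blast
  show ?thesis using P b qmod_act[OF whom_in_weyl[OF b(1)] r] by blast
qed

lemma qmod_generator: "wcoset a id \<in> gdeg Q 0" "gact Q (wcoset a id) a = gzero Q"
proof -
  have "whom 0 (id :: 'k wop)" using whom_sc[of 1] by (metis id_eq_hom_op oscal_eq_hom_op one_pCons)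
  then show "wcoset a id \<in> gdeg Q 0" by (auto simp: qmod_deg)
  have "gact Q (wcoset a id) a = wcoset a (id \<circ> a)" by (rule qmod_act[OF weyl_id gen_in_weyl])
  also have "\<dots> = wcoset a 0"
  proof -
    have "a = a \<circ> id" by simp
    then have "\<exists>c\<in>weyl. a = a \<circ> c" using weyl_id by blast
    then show ?thesis using wcoset_eq_0_iff[OF gen_in_weyl] by simp
  qed
  finally show "gact Q (wcoset a id) a = gzero Q" using qmod_zero by simp
qed

lemma killed_in_degree_qmod:
  assumes r: "r \<in> weyl"
  shows "killed_in_degree Q d r \<longleftrightarrow>
    (\<exists>P. vanishes_below d P \<and> wcoset a (hom_op d P) \<noteq> wcoset a 0 \<and> wcoset a (hom_op d P \<circ> r) = wcoset a 0)"
proof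
  assume "killed_in_degree Q d r"
  then obtain v where "v \<in> gdeg Q d" "v \<noteq> gzero Q" "gact Q v r = gzero Q"
    unfolding killed_in_degree_def by blast
  then show "\<exists>P. vanishes_below d P \<and> wcoset a (hom_op d P) \<noteq> wcoset a 0 \<and> wcoset a (hom_op d P \<circ> r) = wcoset a 0"
    using qmod_deg_eq_hom_op[OF _ r] qmod_zero by metis
next
  assume "\<exists>P. vanishes_below d P \<and> wcoset a (hom_op d P) \<noteq> wcoset a 0 \<and> wcoset a (hom_op d P \<circ> r) = wcoset a 0"
  then obtain P where P: "vanishes_below d P" "wcoset a (hom_op d P) \<noteq> wcoset a 0" "wcoset a (hom_op d P \<circ> r) = wcoset a 0"
    by blast
  have "wcoset a (hom_op d P) \<in> gdeg Q d" using whom_hom_op[OF P(1)] by (auto simp: qmod_deg)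
  moreover have "gact Q (wcoset a (hom_op d P)) r = wcoset a (hom_op d P \<circ> r)"
    by (rule qmod_act[OF hom_op_in_weyl[OF P(1)] r])
  ultimately show "killed_in_degree Q d r" using P(2,3) qmod_zero unfolding killed_in_degree_def by auto
qed

lemma killed_in_degree_generator:
  assumes "is_simple Q" shows "killed_in_degree Q 0 a"
proof -
  interpret grmod Q by unfold_locales (rule qmod_grmod)
  have "wcoset a id \<noteq> gzero Q"
  proof
    assume one: "wcoset a id = gzero Q"
    have "gcar Q \<subseteq> {gzero Q}"
    proof
      fix u assume "u \<in> gcar Q"
      then obtain b where b: "b \<in> weyl" "u = wcoset a b" by (auto simp: qmod_car)
      then have "u = gact Q (wcoset a id) b" using qmod_act[OF weyl_id b(1)] by simp
      then show "u \<in> {gzero Q}" using one zero_act[OF b(1)] by simp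
    qed
    then show False using assms zero_closed unfolding is_simple_def by blast
  qed
  then show ?thesis using qmod_generator unfolding killed_in_degree_def by blast
qed

end

locale killed_generator = weyl_quotient a e G + M: grmod M
  for a :: "'k::field_char_0 wop" and e G and M :: "('k wop, 'v) rgr" +
  fixes u0 :: 'v and s :: int
  assumes u0_deg: "u0 \<in> gdeg M s" and u0_killed: "gact M u0 a = gzero M"
begin

lemma u0_car: "u0 \<in> gcar M"
  using u0_deg M.deg_subset by blast

lemma act_u0_wcoset_cong:
  assumes b: "b \<in> weyl" "b' \<in> weyl" and eq: "wcoset a b = wcoset a b'"
  shows "gact M u0 b = gact M u0 b'"
proof -
  obtain c where c: "c \<in> weyl" "b' = b + (a \<circ> c)" using wcoset_eq_iff[OF b] eq by blast
  have "gact M u0 (a \<circ> c) = gzero M"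
    using M.act_comp[OF u0_car gen_in_weyl c(1)] u0_killed M.zero_act[OF c(1)] by simp
  then show ?thesis
    using M.act_oadd[OF u0_car b(1) weyl_mult[OF gen_in_weyl c(1)]] M.add_zero[OF M.act_closed[OF u0_car b(1)]] c(2)
    by (simp add: oadd_eq_plus)
qed

lemma wcoset_in_ann_iff:
  assumes "b \<in> weyl"
  shows "wcoset a b \<in> {wcoset a b | b. b \<in> weyl \<and> gact M u0 b = gzero M} \<longleftrightarrow> gact M u0 b = gzero M"
proof
  assume "wcoset a b \<in> {wcoset a b | b. b \<in> weyl \<and> gact M u0 b = gzero M}"
  then obtain b' where "b' \<in> weyl" "gact M u0 b' = gzero M" "wcoset a b = wcoset a b'" by blast
  then show "gact M u0 b = gzero M" using act_u0_wcoset_cong[OF assms] by metis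
qed (use assms in blast)

lemma ann_gsub: "is_gsub Q {wcoset a b | b. b \<in> weyl \<and> gact M u0 b = gzero M}"
  (is "is_gsub Q ?K")
  unfolding is_gsub_def
proof (intro conjI ballI)
  show "?K \<subseteq> gcar Q" by (auto simp: qmod_car)
  show "gzero Q \<in> ?K" using M.act_0[OF u0_car] weyl_0 qmod_zero by auto
  fix C assume "C \<in> ?K"
  then obtain b where b: "b \<in> weyl" "gact M u0 b = gzero M" "C = wcoset a b" by blast
  { fix D assume "D \<in> ?K"
    then obtain b' where b': "b' \<in> weyl" "gact M u0 b' = gzero M" "D = wcoset a b'" by blast
    have "gact M u0 (b + b') = gzero M"
      using M.act_oadd[OF u0_car b(1) b'(1)] b(2) b'(2) M.zero_add[OF M.zero_closed] by (simp add: oadd_eq_plus)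
    then show "gadd Q C D \<in> ?K" using qmod_add[OF b(1) b'(1)] b(3) b'(3) weyl_plus[OF b(1) b'(1)] by auto }
  { fix r :: "'k wop" assume r: "r \<in> weyl"
    have "gact M u0 (b \<circ> r) = gzero M" using M.act_comp[OF u0_car b(1) r] b(2) M.zero_act[OF r] by simp
    then show "gact Q C r \<in> ?K" using qmod_act[OF b(1) r] b(3) weyl_mult[OF b(1) r] by auto }
  obtain ns h where h: "distinct ns" "\<forall>n\<in>set ns. whom n (h n) \<and> gact M u0 (h n) = gzero M"
    "b = sum_list (map h ns)"
    using M.act_eq_0_components[OF u0_deg b(1,2)] by metis
  have hw: "\<forall>j\<in>set ns. h j \<in> weyl" using h(2) whom_in_weyl by blast
  have "C = gsum Q (map (\<lambda>j. wcoset a (h j)) ns)" using qmod_gsum[OF hw] h(3) b(3) by simp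
  moreover have "\<forall>j\<in>set ns. wcoset a (h j) \<in> gdeg Q j \<inter> ?K"
    using h(2) whom_in_weyl by (auto simp: qmod_deg)
  ultimately show "\<exists>js f. distinct js \<and> (\<forall>j\<in>set js. f j \<in> gdeg Q j \<inter> ?K) \<and> C = gsum Q (map f js)"
    using h(1) by (intro exI[of _ ns] exI[of _ "\<lambda>j. wcoset a (h j)"]) blast
qed

text \<open>If Q is simple, the annihilator submodule above is zero, so u0 A is a copy of Q.\<close>
lemma act_u0_eq_iff:
  assumes Q: "is_simple Q" and u0: "u0 \<noteq> gzero M" and b: "b \<in> weyl" "b' \<in> weyl"
  shows "gact M u0 b = gact M u0 b' \<longleftrightarrow> wcoset a b = wcoset a b'"
proof
  assume eq: "gact M u0 b = gact M u0 b'"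
  have "wcoset a id \<in> gcar Q" using weyl_id by (auto simp: qmod_car)
  moreover have "wcoset a id \<notin> {wcoset a b | b. b \<in> weyl \<and> gact M u0 b = gzero M}"
    using wcoset_in_ann_iff[OF weyl_id] M.act_id[OF u0_car] u0 by simp
  ultimately have "{wcoset a b | b. b \<in> weyl \<and> gact M u0 b = gzero M} = {gzero Q}"
    using Q ann_gsub unfolding is_simple_def by blast
  moreover have "gact M u0 (b - b') = gzero M" by (rule M.act_diff_eq_0[OF u0_car b eq])
  ultimately have "wcoset a (b - b') = wcoset a 0"
    using wcoset_in_ann_iff[OF weyl_diff[OF b]] qmod_zero by auto
  then show "wcoset a b = wcoset a b'" using wcoset_eq_iff_diff[OF b] by simp
qed (rule act_u0_wcoset_cong[OF b])

definition from_u0 :: "'v \<Rightarrow> 'k wop set" where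
  "from_u0 u = wcoset a (SOME b. b \<in> weyl \<and> u = gact M u0 b)"

lemma from_u0_act:
  assumes Q: "is_simple Q" and u0: "u0 \<noteq> gzero M" and b: "b \<in> weyl"
  shows "from_u0 (gact M u0 b) = wcoset a b"
proof -
  let ?b = "SOME b'. b' \<in> weyl \<and> gact M u0 b = gact M u0 b'"
  have "?b \<in> weyl \<and> gact M u0 b = gact M u0 ?b" by (rule someI[of _ b]) (simp add: b)
  then have "wcoset a b = wcoset a ?b" using act_u0_eq_iff[OF Q u0 b] by blast
  then show ?thesis unfolding from_u0_def by simp
qed

lemma g_iso_gshift_qmod:
  assumes M: "is_simple M" and Q: "is_simple Q" and u0: "u0 \<noteq> gzero M"
  shows "g_iso M (gshift s Q)"
proof -
  have car: "gcar M = {gact M u0 b | b. b \<in> weyl}" using M.simple_generated[OF M u0_deg u0] by simp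
  note g = from_u0_act[OF Q u0]
  have "is_ghom M (gshift s Q) from_u0"
    unfolding is_ghom_def gshift_simps
  proof (intro conjI ballI allI)
    show "from_u0 u \<in> gcar Q" if "u \<in> gcar M" for u using that g by (auto simp: car qmod_car)
    fix u v assume "u \<in> gcar M" "v \<in> gcar M"
    then obtain b b' where b: "b \<in> weyl" "u = gact M u0 b" "b' \<in> weyl" "v = gact M u0 b'" using car by blast
    have "gadd M u v = gact M u0 (b + b')" using M.act_oadd[OF u0_car b(1) b(3)] b by (simp add: oadd_eq_plus)
    then show "from_u0 (gadd M u v) = gadd Q (from_u0 u) (from_u0 v)"
      using g b weyl_plus[OF b(1) b(3)] qmod_add[OF b(1) b(3)] by simp
  next
    fix u and r :: "'k wop" assume "u \<in> gcar M" and r: "r \<in> weyl"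
    then obtain b where b: "b \<in> weyl" "u = gact M u0 b" using car by blast
    have "gact M u r = gact M u0 (b \<circ> r)" using M.act_comp[OF u0_car b(1) r] b by simp
    then show "from_u0 (gact M u r) = gact Q (from_u0 u) r"
      using g b weyl_mult[OF b(1) r] qmod_act[OF b(1) r] by simp
  next
    fix j u assume u: "u \<in> gdeg M j"
    then obtain b where b: "b \<in> weyl" "u = gact M u0 b" using M.deg_subset car by blast
    then obtain c where "whom (j - s) c" "u = gact M u0 c"
      using M.act_homogeneous_component[OF u0_deg b(1)] u by blast
    then show "from_u0 u \<in> gdeg Q (j - s)" using g whom_in_weyl by (auto simp: qmod_deg)
  qed
  moreover have "bij_betw from_u0 (gcar M) (gcar Q)"
    unfolding bij_betw_def inj_on_def
    using g act_u0_eq_iff[OF Q u0] M.act_closed[OF u0_car] by (auto simp: car qmod_car image_iff)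
  ultimately show ?thesis unfolding g_iso_def by auto
qed

end

lemma (in weyl_quotient) iso_from_killed:
  fixes M :: "('k wop, 'v) rgr"
  assumes "is_grmod M" "is_simple M" "is_simple Q" "killed_in_degree M s a"
  shows "g_iso M (gshift s Q)"
proof -
  obtain u0 where u0: "u0 \<in> gdeg M s" "u0 \<noteq> gzero M" "gact M u0 a = gzero M"
    using assms(4) unfolding killed_in_degree_def by blast
  interpret killed_generator a e G M u0 s
    by unfold_locales (fact G_vanishes a_eq_hom_op assms(1) u0(1) u0(3))+
  show ?thesis by (rule g_iso_gshift_qmod[OF assms(2,3) u0(2)])
qed

section \<open>The modules X, Y and M_\<lambda>\<close>

abbreviation wz :: "'k::field \<Rightarrow> 'k wop" where
  "wz l \<equiv> oadd (wx \<circ> wy) (oscal l)"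

lemma xy_eq_hom_op: "(wx \<circ> wy :: 'k::field_char_0 wop) = hom_op 0 [:1,1:]"
proof -
  have "(wx \<circ> wy :: 'k wop) = hom_op (1 + -1) (1 * ([:0,1:] \<circ>\<^sub>p [:- of_int (-1), 1:]))"
    unfolding wx_eq_hom_op wy_eq_hom_op by (rule hom_op_comp) (simp add: vanishes_below_def)
  also have "\<dots> = hom_op 0 [:1,1:]" by (rule hom_op_cong) (simp_all add: poly_pcompose)
  finally show ?thesis .
qed

lemma wz_eq_hom_op: "wz l = (hom_op 0 [:1 + l, 1:] :: 'k::field_char_0 wop)"
proof -
  have "wz l = hom_op 0 [:1,1:] + hom_op 0 [:l:]" by (simp add: oadd_eq_plus xy_eq_hom_op oscal_eq_hom_op)
  also have "\<dots> = hom_op 0 [:1 + l, 1:]" by (subst hom_op_add[symmetric]) (rule hom_op_cong, simp_all)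
  finally show ?thesis .
qed

lemma wz_in_weyl: "wz l \<in> weyl"
  by (intro weyl_add weyl_mult weyl_x weyl_y weyl_sc)

lemma hom_op_comp_wx: "vanishes_below d P \<Longrightarrow> hom_op d P \<circ> wx = hom_op (d + 1) ([:0,1:] * (P \<circ>\<^sub>p [:- 1, 1:]))"
  unfolding wx_eq_hom_op using hom_op_comp[of 1 "[:0,1:]" d P] by (simp add: vanishes_below_def)

lemma hom_op_comp_wy: "vanishes_below d P \<Longrightarrow> hom_op d P \<circ> wy = hom_op (d - 1) (P \<circ>\<^sub>p [:1, 1:])"
  unfolding wy_eq_hom_op using hom_op_comp[of "-1" 1 d P] by (simp add: vanishes_below_def)

lemma hom_op_comp_wz: "vanishes_below d P \<Longrightarrow> hom_op d P \<circ> wz l = hom_op d ([:1 + l,1:] * P)"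
  unfolding wz_eq_hom_op using hom_op_comp[of 0 "[:1 + l,1:]" d P] by (simp add: vanishes_below_def)

lemma vanishes_below_comp_wx: "vanishes_below d P \<Longrightarrow> vanishes_below (d + 1) ([:0,1:] * (P \<circ>\<^sub>p [:- 1, 1:]))"
  using vanishes_below_comp[of d P 1 "[:0,1:]"] by (simp add: vanishes_below_def add.commute)

lemma vanishes_below_comp_wy: "vanishes_below d P \<Longrightarrow> vanishes_below (d - 1) (P \<circ>\<^sub>p [:1, 1:])"
  using vanishes_below_comp[of d P "-1" 1] by (simp add: vanishes_below_def)

lemma vanishes_below_comp_wz: "vanishes_below d P \<Longrightarrow> vanishes_below d ([:1 + l,1:] * P)"
  by (simp add: vanishes_below_def)

lemma weyl_quotient_wx: "weyl_quotient (wx :: 'k::field_char_0 wop) 1 [:0,1:]"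
  by unfold_locales (simp_all add: wx_eq_hom_op vanishes_below_def)

lemma weyl_quotient_wy: "weyl_quotient (wy :: 'k::field_char_0 wop) (-1) 1"
  by unfold_locales (simp_all add: wy_eq_hom_op vanishes_below_def)

lemma weyl_quotient_wz: "weyl_quotient (wz l :: 'k::field_char_0 wop) 0 [:1 + l, 1:]"
  by unfold_locales (simp_all add: wz_eq_hom_op vanishes_below_def)

lemma of_int_add_nonint: "(l :: 'k::field_char_0) \<notin> \<int> \<Longrightarrow> of_int d + l \<noteq> 0"
  by (metis Ints_minus Ints_of_int add.commute add_eq_0_iff)

lemma one_plus_nonint: "(l :: 'k::field_char_0) \<notin> \<int> \<Longrightarrow> 1 + l \<notin> of_int ` S"
  by (metis Ints_1 Ints_diff Ints_of_int add_diff_cancel_left' imageE)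

lemma qmod_wx_simple: "is_simple (qmod (wx :: 'k::field_char_0 wop))"
proof (rule weyl_quotient.qmod_simple_linear[OF weyl_quotient_wx refl zero_le_one])
  show "(0 :: 'k) \<notin> of_int ` {0<..}" by auto
  show "of_int (- 1) - 0 \<noteq> (of_nat i :: 'k)" for i
  proof -
    have "(of_int (- 1) :: 'k) \<noteq> of_int (int i)" by (subst of_int_eq_iff) simp
    then show ?thesis by simp
  qed
qed

lemma qmod_wy_simple: "is_simple (qmod (wy :: 'k::field_char_0 wop))"
  by (rule weyl_quotient.qmod_simple_unit[OF weyl_quotient_wy]) simp_all

lemma Mmod_simple:
  assumes l: "(l :: 'k::field_char_0) \<notin> \<int>" shows "is_simple (Mmod l)"
  unfolding Mmod_def
proof (rule weyl_quotient.qmod_simple_linear[OF weyl_quotient_wz refl order_refl one_plus_nonint[OF l]])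
  show "of_int (- 0) - (1 + l) \<noteq> of_nat i" for i
  proof
    assume "of_int (- 0) - (1 + l) = of_nat i"
    then have "l = of_int (- 1 - int i)" by (simp add: algebra_simps)
    then show False using l by (metis Ints_of_int)
  qed
qed

lemma wcoset_wx_eq_0_iff:
  assumes "vanishes_below d P"
  shows "wcoset wx (hom_op d P) = wcoset wx (0 :: 'k::field_char_0 wop) \<longleftrightarrow> poly P (of_int d - 1) = 0"
proof -
  have "(0 :: 'k) \<notin> of_int ` {0<..}" by auto
  then show ?thesis using weyl_quotient.wcoset_eq_0_iff_linear[OF weyl_quotient_wx refl zero_le_one _ assms] by simp
qed

lemma wcoset_wy_eq_0_iff:
  "vanishes_below d P \<Longrightarrow> wcoset wy (hom_op d P) = wcoset wy (0 :: 'k::field_char_0 wop) \<longleftrightarrow> (0 \<le> d \<longrightarrow> poly P (of_int d) = 0)"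
  using weyl_quotient.wcoset_eq_0_iff_unit[OF weyl_quotient_wy] by simp

lemma wcoset_wz_eq_0_iff:
  assumes "(l :: 'k::field_char_0) \<notin> \<int>" and "vanishes_below d P"
  shows "wcoset (wz l) (hom_op d P) = wcoset (wz l) 0 \<longleftrightarrow> poly P (of_int d - (1 + l)) = 0"
  using weyl_quotient.wcoset_eq_0_iff_linear[OF weyl_quotient_wz refl order_refl one_plus_nonint[OF assms(1)] assms(2)]
  by simp

lemma killed_qmod_wx_wx: "killed_in_degree (qmod (wx :: 'k::field_char_0 wop)) d wx \<longleftrightarrow> d = 0"
proof
  assume "killed_in_degree (qmod wx) d (wx :: 'k wop)"
  then obtain P where P: "vanishes_below d P" "wcoset wx (hom_op d P) \<noteq> wcoset wx 0"
    "wcoset wx (hom_op (d + 1) ([:0,1:] * (P \<circ>\<^sub>p [:- 1, 1:]))) = wcoset wx (0 :: 'k wop)"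
    unfolding weyl_quotient.killed_in_degree_qmod[OF weyl_quotient_wx weyl_x] by (metis hom_op_comp_wx)
  show "d = 0"
    using wcoset_wx_eq_0_iff[OF P(1)] wcoset_wx_eq_0_iff[OF vanishes_below_comp_wx[OF P(1)]] P(2,3)
    by (simp add: poly_pcompose)
next
  assume "d = 0"
  then show "killed_in_degree (qmod wx) d (wx :: 'k wop)"
    using weyl_quotient.killed_in_degree_generator[OF weyl_quotient_wx qmod_wx_simple] by simp
qed

lemma not_killed_qmod_wx_wy: "\<not> killed_in_degree (qmod (wx :: 'k::field_char_0 wop)) d wy"
proof
  assume "killed_in_degree (qmod wx) d (wy :: 'k wop)"
  then obtain P where P: "vanishes_below d P" "wcoset wx (hom_op d P) \<noteq> wcoset wx 0"
    "wcoset wx (hom_op (d - 1) (P \<circ>\<^sub>p [:1, 1:])) = wcoset wx (0 :: 'k wop)"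
    unfolding weyl_quotient.killed_in_degree_qmod[OF weyl_quotient_wx weyl_y] by (metis hom_op_comp_wy)
  show False
    using wcoset_wx_eq_0_iff[OF P(1)] wcoset_wx_eq_0_iff[OF vanishes_below_comp_wy[OF P(1)]] P(2,3)
    by (simp add: poly_pcompose)
qed

lemma not_killed_qmod_wx_wz:
  assumes l: "(l :: 'k::field_char_0) \<notin> \<int>" shows "\<not> killed_in_degree (qmod wx) d (wz l)"
proof
  assume "killed_in_degree (qmod wx) d (wz l)"
  then obtain P where P: "vanishes_below d P" "wcoset wx (hom_op d P) \<noteq> wcoset wx 0"
    "wcoset wx (hom_op d ([:1 + l,1:] * P)) = wcoset wx (0 :: 'k wop)"
    unfolding weyl_quotient.killed_in_degree_qmod[OF weyl_quotient_wx wz_in_weyl] by (metis hom_op_comp_wz)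
  have "poly P (of_int d - 1) \<noteq> 0" "(of_int d + l) * poly P (of_int d - 1) = 0"
    using wcoset_wx_eq_0_iff[OF P(1)] wcoset_wx_eq_0_iff[OF vanishes_below_comp_wz[OF P(1), of l]] P(2,3)
    by (simp_all add: algebra_simps)
  then show False using of_int_add_nonint[OF l, of d] by simp
qed

lemma killed_qmod_wy_wy: "killed_in_degree (qmod (wy :: 'k::field_char_0 wop)) d wy \<longleftrightarrow> d = 0"
proof
  assume "killed_in_degree (qmod wy) d (wy :: 'k wop)"
  then obtain P where P: "vanishes_below d P" "wcoset wy (hom_op d P) \<noteq> wcoset wy 0"
    "wcoset wy (hom_op (d - 1) (P \<circ>\<^sub>p [:1, 1:])) = wcoset wy (0 :: 'k wop)"
    unfolding weyl_quotient.killed_in_degree_qmod[OF weyl_quotient_wy weyl_y] by (metis hom_op_comp_wy)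
  show "d = 0"
    using wcoset_wy_eq_0_iff[OF P(1)] wcoset_wy_eq_0_iff[OF vanishes_below_comp_wy[OF P(1)]] P(2,3)
    by (simp add: poly_pcompose)
next
  assume "d = 0"
  then show "killed_in_degree (qmod wy) d (wy :: 'k wop)"
    using weyl_quotient.killed_in_degree_generator[OF weyl_quotient_wy qmod_wy_simple] by simp
qed

lemma not_killed_qmod_wy_wx: "\<not> killed_in_degree (qmod (wy :: 'k::field_char_0 wop)) d wx"
proof
  assume "killed_in_degree (qmod wy) d (wx :: 'k wop)"
  then obtain P where P: "vanishes_below d P" "wcoset wy (hom_op d P) \<noteq> wcoset wy 0"
    "wcoset wy (hom_op (d + 1) ([:0,1:] * (P \<circ>\<^sub>p [:- 1, 1:]))) = wcoset wy (0 :: 'k wop)"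
    unfolding weyl_quotient.killed_in_degree_qmod[OF weyl_quotient_wy weyl_x] by (metis hom_op_comp_wx)
  have "0 \<le> d" "poly P (of_int d) \<noteq> 0" "(of_int (d + 1) :: 'k) * poly P (of_int d) = 0"
    using wcoset_wy_eq_0_iff[OF P(1)] wcoset_wy_eq_0_iff[OF vanishes_below_comp_wx[OF P(1)]] P(2,3)
    by (simp_all add: poly_pcompose)
  then show False by (simp only: mult_eq_0_iff of_int_eq_0_iff) simp
qed

lemma not_killed_qmod_wy_wz:
  assumes l: "(l :: 'k::field_char_0) \<notin> \<int>" shows "\<not> killed_in_degree (qmod wy) d (wz l)"
proof
  assume "killed_in_degree (qmod wy) d (wz l)"
  then obtain P where P: "vanishes_below d P" "wcoset wy (hom_op d P) \<noteq> wcoset wy 0"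
    "wcoset wy (hom_op d ([:1 + l,1:] * P)) = wcoset wy (0 :: 'k wop)"
    unfolding weyl_quotient.killed_in_degree_qmod[OF weyl_quotient_wy wz_in_weyl] by (metis hom_op_comp_wz)
  have "poly P (of_int d) \<noteq> 0" "(of_int (d + 1) + l) * poly P (of_int d) = 0"
    using wcoset_wy_eq_0_iff[OF P(1)] wcoset_wy_eq_0_iff[OF vanishes_below_comp_wz[OF P(1), of l]] P(2,3)
    by (simp_all add: algebra_simps)
  then show False using of_int_add_nonint[OF l, of "d + 1"] by simp
qed

lemma not_killed_Mmod_wx:
  assumes l: "(l :: 'k::field_char_0) \<notin> \<int>" shows "\<not> killed_in_degree (Mmod l) d wx"
proof
  assume "killed_in_degree (Mmod l) d wx"
  then obtain P where P: "vanishes_below d P" "wcoset (wz l) (hom_op d P) \<noteq> wcoset (wz l) 0"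
    "wcoset (wz l) (hom_op (d + 1) ([:0,1:] * (P \<circ>\<^sub>p [:- 1, 1:]))) = wcoset (wz l) 0"
    unfolding Mmod_def weyl_quotient.killed_in_degree_qmod[OF weyl_quotient_wz weyl_x] by (metis hom_op_comp_wx)
  have "- l \<notin> \<int>" using l by (metis Ints_minus minus_minus)
  then show False
    using wcoset_wz_eq_0_iff[OF l P(1)] wcoset_wz_eq_0_iff[OF l vanishes_below_comp_wx[OF P(1)]] P(2,3)
      of_int_add_nonint[of "- l" d]
    by (simp add: poly_pcompose algebra_simps)
qed

lemma not_killed_Mmod_wy:
  assumes l: "(l :: 'k::field_char_0) \<notin> \<int>" shows "\<not> killed_in_degree (Mmod l) d wy"
proof
  assume "killed_in_degree (Mmod l) d wy"
  then obtain P where P: "vanishes_below d P" "wcoset (wz l) (hom_op d P) \<noteq> wcoset (wz l) 0"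
    "wcoset (wz l) (hom_op (d - 1) (P \<circ>\<^sub>p [:1, 1:])) = wcoset (wz l) 0"
    unfolding Mmod_def weyl_quotient.killed_in_degree_qmod[OF weyl_quotient_wz weyl_y] by (metis hom_op_comp_wy)
  show False
    using wcoset_wz_eq_0_iff[OF l P(1)] wcoset_wz_eq_0_iff[OF l vanishes_below_comp_wy[OF P(1)]] P(2,3)
    by (simp add: poly_pcompose algebra_simps)
qed

lemma killed_Mmod_wz:
  assumes l: "(l :: 'k::field_char_0) \<notin> \<int>"
  shows "killed_in_degree (Mmod l) 0 (wz l') \<longleftrightarrow> l' = l"
proof
  assume "killed_in_degree (Mmod l) 0 (wz l')"
  then obtain P where P: "vanishes_below 0 P" "wcoset (wz l) (hom_op 0 P) \<noteq> wcoset (wz l) 0"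
    "wcoset (wz l) (hom_op 0 ([:1 + l',1:] * P)) = wcoset (wz l) 0"
    unfolding Mmod_def weyl_quotient.killed_in_degree_qmod[OF weyl_quotient_wz wz_in_weyl] by (metis hom_op_comp_wz)
  have "poly P (- (1 + l)) \<noteq> 0" "(l' - l) * poly P (- (1 + l)) = 0"
    using wcoset_wz_eq_0_iff[OF l P(1)] wcoset_wz_eq_0_iff[OF l vanishes_below_comp_wz[OF P(1), of l']] P(2,3)
    by (simp_all add: algebra_simps)
  then show "l' = l" by simp
next
  assume "l' = l"
  then show "killed_in_degree (Mmod l) 0 (wz l')"
    using weyl_quotient.killed_in_degree_generator[OF weyl_quotient_wz Mmod_simple[OF l, unfolded Mmod_def]]
    by (simp add: Mmod_def)
qed

section \<open>Eigenvectors of yx in a simple module\<close>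

context grmod
begin

definition yx_eigvec :: "'v \<Rightarrow> int \<Rightarrow> 'k \<Rightarrow> bool" where
  "yx_eigvec f j s \<longleftrightarrow> f \<in> gdeg M j \<and> f \<noteq> gzero M \<and> gact M f (hom_op 0 [:- s, 1:]) = gzero M"

lemma yx_eigvec_car: "yx_eigvec f j s \<Longrightarrow> f \<in> gcar M"
  unfolding yx_eigvec_def using deg_subset by blast

lemma yx_eigvec_act_const:
  assumes f: "yx_eigvec f j s"
  shows "gact M f (hom_op 0 [:c - s, 1:]) = gact M f (oscal c)"
proof -
  have fc: "f \<in> gcar M" using yx_eigvec_car[OF f] .
  have split: "hom_op 0 [:c - s, 1:] = hom_op 0 ([:- s, 1:] + [:c:])" by (rule hom_op_cong) (simp_all add: algebra_simps)
  have "gact M f (hom_op 0 [:c - s, 1:]) = gadd M (gact M f (hom_op 0 [:- s, 1:])) (gact M f (hom_op 0 [:c:]))"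
    unfolding split by (rule act_hom_op_0_add[OF fc])
  also have "\<dots> = gact M f (oscal c)"
    using f zero_add[OF act_closed[OF fc weyl_sc]] unfolding yx_eigvec_def by (simp add: hom_op_const)
  finally show ?thesis .
qed

lemma yx_eigvec_act_wx_neq_0:
  assumes f: "yx_eigvec f j s" and s: "s + 1 \<noteq> 0"
  shows "gact M f wx \<noteq> gzero M"
proof
  assume "gact M f wx = gzero M"
  have fc: "f \<in> gcar M" using yx_eigvec_car[OF f] .
  have "gact M f (wx \<circ> wy) = gzero M"
    using act_comp[OF fc weyl_x weyl_y] \<open>gact M f wx = gzero M\<close> zero_act[OF weyl_y] by simp
  moreover have "(wx \<circ> wy :: 'k wop) = hom_op 0 [:(s + 1) - s, 1:]"
    unfolding xy_eq_hom_op by simp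
  ultimately have "gact M f (oscal (s + 1)) = gzero M" using yx_eigvec_act_const[OF f, of "s + 1"] by simp
  then show False using act_oscal_neq_0[OF fc _ s] f unfolding yx_eigvec_def by blast
qed

lemma yx_eigvec_act_wy_neq_0:
  assumes f: "yx_eigvec f j s" and s: "s \<noteq> 0"
  shows "gact M f wy \<noteq> gzero M"
proof
  assume "gact M f wy = gzero M"
  have fc: "f \<in> gcar M" using yx_eigvec_car[OF f] .
  have "gact M f (wy \<circ> wx) = gzero M"
    using act_comp[OF fc weyl_y weyl_x] \<open>gact M f wy = gzero M\<close> zero_act[OF weyl_x] by simp
  moreover have "(wy \<circ> wx :: 'k wop) = hom_op 0 [:(s) - s, 1:]"
    unfolding yx_eq_hom_op by simp
  ultimately have "gact M f (oscal (s)) = gzero M" using yx_eigvec_act_const[OF f, of "s"] by simp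
  then show False using act_oscal_neq_0[OF fc _ s] f unfolding yx_eigvec_def by blast
qed

lemma yx_eigvec_act_wx:
  assumes f: "yx_eigvec f j s" and nz: "gact M f wx \<noteq> gzero M"
  shows "yx_eigvec (gact M f wx) (j + 1) (s + 1)"
proof -
  have fc: "f \<in> gcar M" using yx_eigvec_car[OF f] .
  have "gact M (gact M f wx) (hom_op 0 [:- (s + 1), 1:]) = gact M (gact M f (hom_op 0 [:- s, 1:])) wx"
    using act_comp[OF fc weyl_x hom_op_0_in_weyl] act_comp[OF fc hom_op_0_in_weyl weyl_x] wx_comp_shift by metis
  then show ?thesis
    using f nz act_deg[of f j 1 wx] whom_x zero_act[OF weyl_x] unfolding yx_eigvec_def by simp
qed

lemma yx_eigvec_act_wy:
  assumes f: "yx_eigvec f j s" and nz: "gact M f wy \<noteq> gzero M"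
  shows "yx_eigvec (gact M f wy) (j - 1) (s - 1)"
proof -
  have fc: "f \<in> gcar M" using yx_eigvec_car[OF f] .
  have "gact M (gact M f wy) (hom_op 0 [:- (s - 1), 1:]) = gact M (gact M f (hom_op 0 [:- s, 1:])) wy"
    using act_comp[OF fc weyl_y hom_op_0_in_weyl] act_comp[OF fc hom_op_0_in_weyl weyl_y] wy_comp_shift by metis
  then show ?thesis
    using f nz act_deg[of f j "-1" wy] whom_y zero_act[OF weyl_y] unfolding yx_eigvec_def by simp
qed

lemma yx_eigvec_nonint_deg_0:
  assumes "yx_eigvec f j s" "s \<notin> \<int>"
  shows "\<exists>f'. yx_eigvec f' 0 (s - of_int j)"
  using assms
proof (induct "nat \<bar>j\<bar>" arbitrary: f j s)
  case 0 then show ?case by auto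
next
  case (Suc n)
  show ?case
  proof (cases "0 < j")
    case True
    have "s \<noteq> 0" using Suc(4) by auto
    then have "yx_eigvec (gact M f wy) (j - 1) (s - 1)"
      using yx_eigvec_act_wy[OF Suc(3)] yx_eigvec_act_wy_neq_0[OF Suc(3)] by blast
    moreover have "s - 1 \<notin> \<int>" using Suc(4) by (metis Ints_1 Ints_add diff_add_cancel)
    moreover have "n = nat \<bar>j - 1\<bar>" using Suc(2) True by linarith
    ultimately show ?thesis using Suc(1) by fastforce
  next
    case False
    have "s + 1 \<noteq> 0" using Suc(4) by (metis Ints_1 Ints_minus add.commute add_eq_0_iff)
    then have "yx_eigvec (gact M f wx) (j + 1) (s + 1)"
      using yx_eigvec_act_wx[OF Suc(3)] yx_eigvec_act_wx_neq_0[OF Suc(3)] by blast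
    moreover have "s + 1 \<notin> \<int>" using Suc(4) by (metis Ints_1 Ints_diff add_diff_cancel)
    moreover have "n = nat \<bar>j + 1\<bar>" using Suc(2) False by linarith
    ultimately show ?thesis using Suc(1) by fastforce
  qed
qed

text \<open>At eigenvalue -1 we have f xy = f (yx + 1) = 0, so x or y kills a nonzero homogeneous element.\<close>
lemma yx_eigvec_minus_one_killed:
  assumes f: "yx_eigvec f j (-1)"
  shows "killed_in_degree M j wx \<or> killed_in_degree M (j + 1) wy"
proof (cases "gact M f wx = gzero M")
  case True
  then show ?thesis using f unfolding yx_eigvec_def killed_in_degree_def by blast
next
  case False
  have fc: "f \<in> gcar M" using yx_eigvec_car[OF f] .
  have "gact M (gact M f wx) wy = gzero M"
    using f act_comp[OF fc weyl_x weyl_y] unfolding yx_eigvec_def xy_eq_hom_op by simp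
  moreover have "gact M f wx \<in> gdeg M (j + 1)" using act_deg[OF _ whom_x] f unfolding yx_eigvec_def by blast
  ultimately show ?thesis using False unfolding killed_in_degree_def by blast
qed

lemma yx_eigvec_int_killed:
  assumes "yx_eigvec f j (of_int t)"
  shows "\<exists>j. killed_in_degree M j wx \<or> killed_in_degree M j wy"
  using assms
proof (induct "nat \<bar>t + 1\<bar>" arbitrary: f j t)
  case 0
  then show ?case using yx_eigvec_minus_one_killed[of f j] by (auto simp: add_eq_0_iff)
next
  case (Suc n)
  show ?case
  proof (cases "t < -1")
    case True
    have "(of_int t :: 'k) + 1 \<noteq> 0"
      using True by (metis of_int_1 of_int_add of_int_eq_0_iff add.commute add_eq_0_iff less_irrefl)
    then have "yx_eigvec (gact M f wx) (j + 1) (of_int (t + 1))"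
      using yx_eigvec_act_wx[OF Suc(3)] yx_eigvec_act_wx_neq_0[OF Suc(3)] by simp
    moreover have "n = nat \<bar>t + 1 + 1\<bar>" using Suc(2) True by linarith
    ultimately show ?thesis using Suc(1) by blast
  next
    case False
    show ?thesis
    proof (cases "gact M f wy = gzero M")
      case True
      then show ?thesis using Suc(3) unfolding yx_eigvec_def killed_in_degree_def by blast
    next
      case nz: False
      have "yx_eigvec (gact M f wy) (j - 1) (of_int (t - 1))" using yx_eigvec_act_wy[OF Suc(3) nz] by simp
      moreover have "n = nat \<bar>t - 1 + 1\<bar>" using Suc(2) False by linarith
      ultimately show ?thesis using Suc(1) by blast
    qed
  qed
qed

lemma yx_eigvec_exists:
  assumes alg: "\<forall>p :: 'k poly. 0 < degree p \<longrightarrow> (\<exists>r. poly p r = 0)"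
  shows "P \<noteq> 0 \<Longrightarrow> m \<in> gdeg M d \<Longrightarrow> m \<noteq> gzero M \<Longrightarrow> gact M m (hom_op 0 P) = gzero M \<Longrightarrow> \<exists>m' s. yx_eigvec m' d s"
proof (induct "degree P" arbitrary: P m rule: less_induct)
  case less
  have mc: "m \<in> gcar M" using less(3) deg_subset by blast
  show ?case
  proof (cases "degree P = 0")
    case True
    then obtain c where c: "P = [:c:]" by (metis degree_eq_zeroE)
    then have "c \<noteq> 0" using less(2) by simp
    then have "gact M m (oscal c) \<noteq> gzero M" using act_oscal_neq_0[OF mc less(4)] by blast
    moreover have "gact M m (oscal c) = gzero M" using less(5) unfolding c hom_op_const .
    ultimately show ?thesis by blast
  next
    case False
    then obtain r where r: "poly P r = 0" using alg by blast
    then obtain R where R: "P = [:- r, 1:] * R" using poly_eq_0_iff_dvd by (metis dvdE)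
    have R0: "R \<noteq> 0" using less(2) R by auto
    have "degree P = degree [:- r, 1:] + degree R" unfolding R by (rule degree_mult_eq) (use R0 in auto)
    then have dR: "degree R < degree P" by simp
    have hP: "hom_op 0 P = hom_op 0 R \<circ> hom_op 0 [:- r, 1:]" unfolding hom_op_comp_0 R ..
    have mP: "gact M m (hom_op 0 P) = gact M (gact M m (hom_op 0 R)) (hom_op 0 [:- r, 1:])"
      unfolding hP by (rule act_comp[OF mc hom_op_0_in_weyl hom_op_0_in_weyl])
    show ?thesis
    proof (cases "gact M m (hom_op 0 R) = gzero M")
      case True
      then show ?thesis using less(1)[OF dR R0 less(3,4)] by blast
    next
      case False
      have "gact M m (hom_op 0 R) \<in> gdeg M (d + 0)" by (rule act_deg[OF less(3) whom_hom_op_0])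
      then have "yx_eigvec (gact M m (hom_op 0 R)) d r"
        unfolding yx_eigvec_def using False mP less(5) by simp
      then show ?thesis by blast
    qed
  qed
qed

lemma homogeneous_ann_exists:
  assumes s: "is_simple M" and m: "m \<in> gdeg M d" "m \<noteq> gzero M"
  shows "\<exists>P. P \<noteq> 0 \<and> gact M m (hom_op 0 P) = gzero M"
proof -
  have mc: "m \<in> gcar M" using m(1) deg_subset by blast
  define mz where "mz = gact M m (hom_op 0 [:1,1:])"
  have mz: "mz \<in> gdeg M d" using act_deg[OF m(1) whom_hom_op_0, of "[:1,1:]"] unfolding mz_def by simp
  show ?thesis
  proof (cases "mz = gzero M")
    case True
    then show ?thesis unfolding mz_def by (intro exI[of _ "[:1,1:]"]) simp
  next
    case False
    \<comment> \<open>m z generates M, so m = m z R(yx) for some polynomial R\<close>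
    obtain b where b: "b \<in> weyl" "m = gact M mz b" using simple_generated[OF s mz False] mc by blast
    have "gact M mz b \<in> gdeg M d" using m(1) b(2) by simp
    then obtain c where c: "whom 0 c" "gact M mz b = gact M mz c"
      using act_homogeneous_component[OF mz b(1)] by fastforce
    then obtain R where R: "c = hom_op 0 R" using whom_imp_hom_op by blast
    have "gact M m (hom_op 0 (R * [:1,1:])) = gact M mz (hom_op 0 R)"
      unfolding mz_def hom_op_comp_0[symmetric] by (rule act_comp[OF mc hom_op_0_in_weyl hom_op_0_in_weyl])
    also have "\<dots> = gact M m (hom_op 0 1)" using b(2) c(2) R act_id[OF mc] by (simp add: id_eq_hom_op)
    finally have "gact M m (hom_op 0 (R * [:1,1:])) = gact M m (hom_op 0 1)" .
    then have "gact M m (hom_op 0 (R * [:1,1:] - 1)) = gzero M"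
      using act_diff_eq_0[OF mc hom_op_0_in_weyl hom_op_0_in_weyl] by (simp add: hom_op_diff)
    moreover have "R * [:1,1:] - 1 \<noteq> 0"
    proof
      assume "R * [:1,1:] - 1 = 0"
      then have "poly (R * [:1,1:] - 1) (-1) = 0" by simp
      then show False by simp
    qed
    ultimately show ?thesis by blast
  qed
qed

lemma yx_eigvec_killed_wz:
  assumes "yx_eigvec f j s" shows "killed_in_degree M j (wz (- 1 - s))"
proof -
  have "wz (- 1 - s) = hom_op 0 [:- s, 1:]" unfolding wz_eq_hom_op by (rule hom_op_cong) simp_all
  then show ?thesis using assms unfolding yx_eigvec_def killed_in_degree_def by auto
qed

lemma killed_wx_iso_Xmod:
  assumes "is_simple M" "killed_in_degree M j wx" shows "g_iso M (gshift j Xmod)"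
  unfolding Xmod_def by (rule weyl_quotient.iso_from_killed[OF weyl_quotient_wx graded assms(1) qmod_wx_simple assms(2)])

lemma killed_wy_iso_Ymod:
  assumes "is_simple M" "killed_in_degree M j wy" shows "g_iso M (gshift (j - 1) Ymod)"
  unfolding Ymod_def gshift_gshift
  using weyl_quotient.iso_from_killed[OF weyl_quotient_wy graded assms(1) qmod_wy_simple assms(2)] by simp

lemma killed_wz_iso_Mmod:
  assumes "is_simple M" "l \<notin> \<int>" "killed_in_degree M 0 (wz l)" shows "g_iso M (Mmod l)"
  unfolding Mmod_def
  using weyl_quotient.iso_from_killed[OF weyl_quotient_wz graded assms(1) Mmod_simple[OF assms(2), unfolded Mmod_def] assms(3)]
  by (simp add: gshift_0)

lemma simple_classification:
  assumes alg: "\<forall>p :: 'k poly. 0 < degree p \<longrightarrow> (\<exists>r. poly p r = 0)" and s: "is_simple M"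
  shows "(\<exists>n. g_iso M (gshift n Xmod)) \<or> (\<exists>n. g_iso M (gshift n Ymod)) \<or> (\<exists>l. l \<notin> \<int> \<and> g_iso M (Mmod l))"
proof -
  obtain d m where m: "m \<in> gdeg M d" "m \<noteq> gzero M" using simple_nonzero_homogeneous[OF s] by blast
  obtain P where P: "P \<noteq> 0" "gact M m (hom_op 0 P) = gzero M" using homogeneous_ann_exists[OF s m] by blast
  obtain f \<sigma> where f: "yx_eigvec f d \<sigma>" using yx_eigvec_exists[OF alg P(1) m P(2)] by blast
  show ?thesis
  proof (cases "\<sigma> \<in> \<int>")
    case True
    then obtain t where "\<sigma> = of_int t" by (metis Ints_cases)
    then obtain j where "killed_in_degree M j wx \<or> killed_in_degree M j wy"
      using yx_eigvec_int_killed f by blast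
    then show ?thesis
    proof
      assume "killed_in_degree M j wx"
      then show ?thesis using killed_wx_iso_Xmod[OF s] by blast
    next
      assume "killed_in_degree M j wy"
      then show ?thesis using killed_wy_iso_Ymod[OF s] by blast
    qed
  next
    case False
    then obtain f' where "yx_eigvec f' 0 (\<sigma> - of_int d)" using yx_eigvec_nonint_deg_0[OF f] by blast
    moreover define l where "l = - 1 - (\<sigma> - of_int d)"
    ultimately have "killed_in_degree M 0 (wz l)" using yx_eigvec_killed_wz by blast
    moreover have "l \<notin> \<int>"
    proof
      assume "l \<in> \<int>"
      then have "- 1 - l + of_int d \<in> \<int>" by (intro Ints_add Ints_diff Ints_minus) auto
      then show False using False unfolding l_def by simp
    qed
    ultimately show ?thesis using killed_wz_iso_Mmod[OF s] by blast
  qed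
qed

end

section \<open>The list is complete and irredundant\<close>

lemma grmod_Xmod_gshift: "is_grmod (gshift n (Xmod :: ('k::field_char_0 wop, 'k wop set) rgr))"
  unfolding Xmod_def by (rule grmod_gshift[OF weyl_quotient.qmod_grmod[OF weyl_quotient_wx]])

lemma simple_Xmod_gshift: "is_simple (gshift n (Xmod :: ('k::field_char_0 wop, 'k wop set) rgr))"
  unfolding Xmod_def by (rule simple_gshift[OF weyl_quotient.qmod_grmod[OF weyl_quotient_wx] qmod_wx_simple])

lemma grmod_Ymod_gshift: "is_grmod (gshift n (Ymod :: ('k::field_char_0 wop, 'k wop set) rgr))"
  unfolding Ymod_def gshift_gshift by (rule grmod_gshift[OF weyl_quotient.qmod_grmod[OF weyl_quotient_wy]])

lemma simple_Ymod_gshift: "is_simple (gshift n (Ymod :: ('k::field_char_0 wop, 'k wop set) rgr))"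
  unfolding Ymod_def gshift_gshift by (rule simple_gshift[OF weyl_quotient.qmod_grmod[OF weyl_quotient_wy] qmod_wy_simple])

lemma grmod_Mmod: "is_grmod (Mmod (l :: 'k::field_char_0))"
  unfolding Mmod_def by (rule weyl_quotient.qmod_grmod[OF weyl_quotient_wz])

lemma killed_Xmod_gshift: "killed_in_degree (gshift n Xmod) j r \<longleftrightarrow> killed_in_degree (qmod wx) (j - n) r"
  by (simp add: Xmod_def killed_in_degree_gshift)

lemma killed_Ymod_gshift: "killed_in_degree (gshift n Ymod) j r \<longleftrightarrow> killed_in_degree (qmod wy) (j - n - 1) r"
  by (simp add: Ymod_def killed_in_degree_gshift)

lemma Xmod_gshift_iso_imp_eq:
  "g_iso (gshift n Xmod) (gshift m (Xmod :: ('k::field_char_0 wop, 'k wop set) rgr)) \<Longrightarrow> n = m"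
  using g_iso_killed_in_degree[OF _ grmod_Xmod_gshift grmod_Xmod_gshift weyl_x, of n m n]
  by (simp add: killed_Xmod_gshift killed_qmod_wx_wx)

lemma Ymod_gshift_iso_imp_eq:
  "g_iso (gshift n Ymod) (gshift m (Ymod :: ('k::field_char_0 wop, 'k wop set) rgr)) \<Longrightarrow> n = m"
  using g_iso_killed_in_degree[OF _ grmod_Ymod_gshift grmod_Ymod_gshift weyl_y, of n m "n + 1"]
  by (simp add: killed_Ymod_gshift killed_qmod_wy_wy)

lemma Mmod_iso_imp_eq:
  assumes l: "l \<notin> \<int>" and l': "l' \<notin> \<int>" and iso: "g_iso (Mmod l) (Mmod (l' :: 'k::field_char_0))"
  shows "l = l'"
proof -
  have "killed_in_degree (Mmod l') 0 (wz l)"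
    using g_iso_killed_in_degree[OF iso grmod_Mmod grmod_Mmod wz_in_weyl] killed_Mmod_wz[OF l] by blast
  then show ?thesis using killed_Mmod_wz[OF l'] by simp
qed

lemma not_iso_Xmod_Ymod: "\<not> g_iso (gshift n Xmod) (gshift m (Ymod :: ('k::field_char_0 wop, 'k wop set) rgr))"
  using g_iso_killed_in_degree[OF _ grmod_Xmod_gshift grmod_Ymod_gshift weyl_x, of n m n]
  by (auto simp: killed_Xmod_gshift killed_Ymod_gshift killed_qmod_wx_wx not_killed_qmod_wy_wx)

lemma not_iso_Ymod_Xmod: "\<not> g_iso (gshift m Ymod) (gshift n (Xmod :: ('k::field_char_0 wop, 'k wop set) rgr))"
  using g_iso_killed_in_degree[OF _ grmod_Ymod_gshift grmod_Xmod_gshift weyl_y, of m n "m + 1"]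
  by (auto simp: killed_Xmod_gshift killed_Ymod_gshift killed_qmod_wy_wy not_killed_qmod_wx_wy)

lemma not_iso_Xmod_Mmod:
  assumes l: "(l :: 'k::field_char_0) \<notin> \<int>" shows "\<not> g_iso (gshift n Xmod) (Mmod l)"
proof
  assume "g_iso (gshift n Xmod) (Mmod l)"
  moreover have "killed_in_degree (gshift n (Xmod :: ('k wop, 'k wop set) rgr)) n wx" using killed_qmod_wx_wx[of 0] by (simp add: killed_Xmod_gshift)
  ultimately have "killed_in_degree (Mmod l) n wx"
    using g_iso_killed_in_degree[OF _ grmod_Xmod_gshift grmod_Mmod weyl_x] by blast
  then show False using not_killed_Mmod_wx[OF l] by blast
qed

lemma not_iso_Mmod_Xmod:
  assumes l: "(l :: 'k::field_char_0) \<notin> \<int>" shows "\<not> g_iso (Mmod l) (gshift n Xmod)"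
proof
  assume "g_iso (Mmod l) (gshift n Xmod)"
  then have "killed_in_degree (gshift n Xmod) 0 (wz l)"
    using g_iso_killed_in_degree[OF _ grmod_Mmod grmod_Xmod_gshift wz_in_weyl] killed_Mmod_wz[OF l] by blast
  then show False using not_killed_qmod_wx_wz[OF l] by (simp add: killed_Xmod_gshift)
qed

lemma not_iso_Ymod_Mmod:
  assumes l: "(l :: 'k::field_char_0) \<notin> \<int>" shows "\<not> g_iso (gshift n Ymod) (Mmod l)"
proof
  assume "g_iso (gshift n Ymod) (Mmod l)"
  moreover have "killed_in_degree (gshift n (Ymod :: ('k wop, 'k wop set) rgr)) (n + 1) wy" using killed_qmod_wy_wy[of 0] by (simp add: killed_Ymod_gshift)
  ultimately have "killed_in_degree (Mmod l) (n + 1) wy"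
    using g_iso_killed_in_degree[OF _ grmod_Ymod_gshift grmod_Mmod weyl_y] by blast
  then show False using not_killed_Mmod_wy[OF l] by blast
qed

lemma not_iso_Mmod_Ymod:
  assumes l: "(l :: 'k::field_char_0) \<notin> \<int>" shows "\<not> g_iso (Mmod l) (gshift n Ymod)"
proof
  assume "g_iso (Mmod l) (gshift n Ymod)"
  then have "killed_in_degree (gshift n Ymod) 0 (wz l)"
    using g_iso_killed_in_degree[OF _ grmod_Mmod grmod_Ymod_gshift wz_in_weyl] killed_Mmod_wz[OF l] by blast
  then show False using not_killed_qmod_wy_wz[OF l] by (simp add: killed_Ymod_gshift)
qed

theorem lemma4p1:
  fixes M :: "('k::field_char_0 wop, 'v) rgr"
  assumes alg_closed: "\<forall>p :: 'k poly. 0 < degree p \<longrightarrow> (\<exists>r. poly p r = 0)"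
  shows
    "(\<forall>n. is_grmod (gshift n (Xmod :: ('k wop, 'k wop set) rgr)) \<and> is_simple (gshift n (Xmod :: ('k wop, 'k wop set) rgr))) \<and>
     (\<forall>n. is_grmod (gshift n (Ymod :: ('k wop, 'k wop set) rgr)) \<and> is_simple (gshift n (Ymod :: ('k wop, 'k wop set) rgr))) \<and>
     (\<forall>l :: 'k. l \<notin> \<int> \<longrightarrow> is_grmod (Mmod l) \<and> is_simple (Mmod l)) \<and>
     ((is_grmod M \<and> is_simple M) \<longrightarrow>
        (\<exists>n. g_iso M (gshift n Xmod)) \<or> (\<exists>n. g_iso M (gshift n Ymod)) \<or>
        (\<exists>l. l \<notin> \<int> \<and> g_iso M (Mmod l))) \<and>
     (\<forall>n m. g_iso (gshift n (Xmod :: ('k wop, 'k wop set) rgr)) (gshift m Xmod) \<longrightarrow> n = m) \<and>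
     (\<forall>n m. g_iso (gshift n (Ymod :: ('k wop, 'k wop set) rgr)) (gshift m Ymod) \<longrightarrow> n = m) \<and>
     (\<forall>l l' :: 'k. l \<notin> \<int> \<longrightarrow> l' \<notin> \<int> \<longrightarrow> g_iso (Mmod l) (Mmod l') \<longrightarrow> l = l') \<and>
     (\<forall>n m. \<not> g_iso (gshift n (Xmod :: ('k wop, 'k wop set) rgr)) (gshift m Ymod) \<and>
            \<not> g_iso (gshift m (Ymod :: ('k wop, 'k wop set) rgr)) (gshift n Xmod)) \<and>
     (\<forall>n (l :: 'k). l \<notin> \<int> \<longrightarrow> \<not> g_iso (gshift n Xmod) (Mmod l) \<and> \<not> g_iso (Mmod l) (gshift n Xmod)) \<and>
     (\<forall>n (l :: 'k). l \<notin> \<int> \<longrightarrow> \<not> g_iso (gshift n Ymod) (Mmod l) \<and> \<not> g_iso (Mmod l) (gshift n Ymod))"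
proof (intro conjI allI impI)
  assume "is_grmod M \<and> is_simple M"
  then show "(\<exists>n. g_iso M (gshift n Xmod)) \<or> (\<exists>n. g_iso M (gshift n Ymod)) \<or> (\<exists>l. l \<notin> \<int> \<and> g_iso M (Mmod l))"
    using grmod.simple_classification[OF grmod.intro alg_closed] by blast
qed (simp_all add: grmod_Xmod_gshift simple_Xmod_gshift grmod_Ymod_gshift simple_Ymod_gshift grmod_Mmod Mmod_simple
  Xmod_gshift_iso_imp_eq Ymod_gshift_iso_imp_eq Mmod_iso_imp_eq
  not_iso_Xmod_Ymod not_iso_Ymod_Xmod not_iso_Xmod_Mmod not_iso_Mmod_Xmod not_iso_Ymod_Mmod not_iso_Mmod_Ymod)

end
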